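(* Consider the Gaussian side-channel assisted three-node full-duplex network described in the context, with capacity region $\mathcal C$, and the regions $\mathcal R_{\rm DC}$ and $\mathcal R_{\rm EC}$ defined in the context. (1) If $W\ge 1$ and $\mathrm{SNR}_{\rm side}\ge \mathrm{SNR}_2$, then $\mathcal R_{\rm DC}$ is within $\tfrac12$ bit/s/Hz of $\mathcal C$: for every $(R_1,R_2)\in\mathcal C$, $\big(R_1-\tfrac12(W_m+W_s),\,R_2-\tfrac12(W_m+W_s)\big)\in\mathcal R_{\rm DC}$. (2) If $W$ is a positive integer and $\mathrm{SNR}_{\rm side}\ge\left(1+\frac{2}{\sqrt2-1}\right)(\mathrm{INR}-2)$, then $\mathcal R_{\rm EC}$ is within $\tfrac12$ bit/s/Hz of $\mathcal C$: for every $(R_1,R_2)\in\mathcal C$, $\big(R_1-\tfrac12(W_m+W_s),\,R_2-\tfrac12(W_m+W_s)\big)\in\mathcal R_{\rm EC}$.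
   Context: Gaussian side-channel assisted three-node full-duplex network: a full-duplex base station (BS) sends a downlink message $S_1$ at rate $R_1$ to a half-duplex mobile M2, while a half-duplex mobile M1 sends an uplink message $S_2$ at rate $R_2$ to BS. The main channel has bandwidth $W_m$; an orthogonal wireless side-channel from M1 to M2 has bandwidth $W_s$, and $W=W_s/W_m$. The real-valued input–output relations are $Y_1=\gamma_1X_1+\gamma^m_{21}X_2+Z_1$ (received by M2), $Y_2=\gamma_2X_2+Z_2$ (received by BS), $Y_3=\gamma^s_{21}X_3+Z_3$ (received by M2 on the side-channel), where $X_1$ is sent by BS, $X_2,X_3$ by M1, and $Z_i$ are mutually independent i.i.d. $\mathcal N(0,\sigma^2)$. Power constraints: $\mathbb E|X_1|^2\le P_1$, $\mathbb E|X_2+X_3|^2\le P_2$. $\mathrm{SNR}_1=|\gamma_1|^2P_1/\sigma^2$, $\mathrm{SNR}_2=|\gamma_2|^2P_2/\sigma^2$, $\mathrm{INR}=|\gamma^m_{21}|^2P_2/\sigma^2$, $\mathrm{SNR}_{\rm side}=|\gamma^s_{21}|^2P_2/\sigma^2$. Rates in bits/s, $C(x)=W_m\log_2(1+x)$, $W\,C(x/W)=W_s\log_2(1+x/W)$. M2 decodes $S_1$ from $(Y_1^n,Y_3^n)$; BS decodes $S_2$ from $Y_2^n$ and $S_1$; BS's symbol at time $i$ may depend on $(S_1,Y_2^{i-1})$. The capacity region $\mathcal C$ is the closure of the set of achievable rate pairs; gaps in bits/s/Hz are normalized by $W_m+W_s$. With $\bar\lambda=1-\lambda$: the decode-and-cancel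 region $\mathcal R_{\rm DC}$ is the union over $\lambda\in[0,1]$ of the sets $\{(R_1,R_2): R_1\le C(\mathrm{SNR}_1),\ R_2\le\min\{W C(\lambda\mathrm{SNR}_{\rm side}/W),\,C(\bar\lambda\mathrm{SNR}_2)\}\}$; the estimate-and-cancel region $\mathcal R_{\rm EC}$ is the union over $K\ge0$ of the sets $\{(R_1,R_2): R_1\le C\big(\mathrm{SNR}_1(1+\tfrac{K^2\mathrm{SNR}_{\rm side}}{(1+K)^2})/(1+\tfrac{K^2\mathrm{SNR}_{\rm side}}{(1+K)^2}+\tfrac{\mathrm{INR}}{(1+K)^2})\big),\ R_2\le C\big(\mathrm{SNR}_2/(1+K)^2\big)\}$. *)

theory Defs
  imports "HOL-Probability.Probability"
begin

text \<open>Time is measured in main-channel samples (2 W_m real samples per second, so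
C(x) = W_m log2(1+x) bits/s).  A block of n main-channel uses lasts n/(2 W_m) seconds,
during which the side channel is used m = floor(n W) times (W = W_s/W_m).
Noise samples have variance sigma^2 on both channels; the power of M1 is the total
energy on both channels divided by the block duration (in main-sample units).\<close>

definition trunc :: "nat \<Rightarrow> (nat \<Rightarrow> real) \<Rightarrow> nat \<Rightarrow> real" where
  "trunc k f = (\<lambda>i. if i < k then f i else 0)"

definition side_len :: "real \<Rightarrow> real \<Rightarrow> nat \<Rightarrow> nat" where
  "side_len Wm Ws n = nat \<lfloor>real n * (Ws / Wm)\<rfloor>"

definition gauss :: "real \<Rightarrow> real measure" where
  "gauss \<sigma> = density lborel (normal_density 0 \<sigma>)"

definition noise :: "real \<Rightarrow> nat \<Rightarrow> nat \<Rightarrow>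
    ((nat \<Rightarrow> real) \<times> (nat \<Rightarrow> real) \<times> (nat \<Rightarrow> real)) measure" where
  "noise \<sigma> n m = (PiM {..<n} (\<lambda>_. gauss \<sigma>)) \<Otimes>\<^sub>M
                    ((PiM {..<n} (\<lambda>_. gauss \<sigma>)) \<Otimes>\<^sub>M (PiM {..<m} (\<lambda>_. gauss \<sigma>)))"

text \<open>Signals.  f2, f3 : M1's encoders (message S2 \<mapsto> main / side codeword);
enc1 : BS encoder, symbol i is a function of S1 and Y2^{i-1}.\<close>
definition sigX2 :: "nat \<Rightarrow> (nat \<Rightarrow> nat \<Rightarrow> real) \<Rightarrow> nat \<Rightarrow> nat \<Rightarrow> real" where
  "sigX2 n f2 s2 = trunc n (f2 s2)"

definition sigX3 :: "nat \<Rightarrow> (nat \<Rightarrow> nat \<Rightarrow> real) \<Rightarrow> nat \<Rightarrow> nat \<Rightarrow> real" where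
  "sigX3 m f3 s2 = trunc m (f3 s2)"

definition sigY2 :: "nat \<Rightarrow> real \<Rightarrow> (nat \<Rightarrow> nat \<Rightarrow> real) \<Rightarrow> nat \<Rightarrow> (nat \<Rightarrow> real) \<Rightarrow> nat \<Rightarrow> real" where
  "sigY2 n g2 f2 s2 z2 = trunc n (\<lambda>i. g2 * sigX2 n f2 s2 i + z2 i)"

definition sigX1 :: "nat \<Rightarrow> real \<Rightarrow> (nat \<Rightarrow> (nat \<Rightarrow> real) \<Rightarrow> nat \<Rightarrow> real) \<Rightarrow>
    (nat \<Rightarrow> nat \<Rightarrow> real) \<Rightarrow> nat \<Rightarrow> nat \<Rightarrow> (nat \<Rightarrow> real) \<Rightarrow> nat \<Rightarrow> real" where
  "sigX1 n g2 enc1 f2 s1 s2 z2 =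
     trunc n (\<lambda>i. enc1 s1 (trunc i (sigY2 n g2 f2 s2 z2)) i)"

definition sigY1 :: "nat \<Rightarrow> real \<Rightarrow> real \<Rightarrow> real \<Rightarrow> (nat \<Rightarrow> (nat \<Rightarrow> real) \<Rightarrow> nat \<Rightarrow> real) \<Rightarrow>
    (nat \<Rightarrow> nat \<Rightarrow> real) \<Rightarrow> nat \<Rightarrow> nat \<Rightarrow> (nat \<Rightarrow> real) \<Rightarrow> (nat \<Rightarrow> real) \<Rightarrow> nat \<Rightarrow> real" where
  "sigY1 n g1 g21m g2 enc1 f2 s1 s2 z1 z2 =
     trunc n (\<lambda>i. g1 * sigX1 n g2 enc1 f2 s1 s2 z2 i + g21m * sigX2 n f2 s2 i + z1 i)"

definition sigY3 :: "nat \<Rightarrow> real \<Rightarrow> (nat \<Rightarrow> nat \<Rightarrow> real) \<Rightarrow> nat \<Rightarrow> (nat \<Rightarrow> real) \<Rightarrow> nat \<Rightarrow> real" where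
  "sigY3 m g21s f3 s2 z3 = trunc m (\<lambda>j. g21s * sigX3 m f3 s2 j + z3 j)"

text \<open>Error event: M2 decodes S1 from (Y1^n, Y3^m); BS decodes S2 from (S1, Y2^n).\<close>
definition err_event where
  "err_event n m g1 g21m g2 g21s enc1 f2 f3 dec2 decBS s1 s2 =
     {\<omega> :: (nat \<Rightarrow> real) \<times> (nat \<Rightarrow> real) \<times> (nat \<Rightarrow> real).
        let z1 = fst \<omega>; z2 = fst (snd \<omega>); z3 = snd (snd \<omega>) in
        dec2 (sigY1 n g1 g21m g2 enc1 f2 s1 s2 z1 z2) (sigY3 m g21s f3 s2 z3) \<noteq> s1
      \<or> decBS s1 (sigY2 n g2 f2 s2 z2) \<noteq> (s2::nat)}"

definition is_code where
  "is_code Wm Ws g1 g21m g2 g21s \<sigma> P1 P2 n M1 M2 \<epsilon> \<longleftrightarrow>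
    (let m = side_len Wm Ws n in
     0 < n \<and> 0 < M1 \<and> 0 < M2 \<and>
     (\<exists>(enc1 :: nat \<Rightarrow> (nat \<Rightarrow> real) \<Rightarrow> nat \<Rightarrow> real)
       (f2 :: nat \<Rightarrow> nat \<Rightarrow> real) (f3 :: nat \<Rightarrow> nat \<Rightarrow> real)
       (dec2 :: (nat \<Rightarrow> real) \<Rightarrow> (nat \<Rightarrow> real) \<Rightarrow> nat)
       (decBS :: nat \<Rightarrow> (nat \<Rightarrow> real) \<Rightarrow> nat).
        (\<forall>s1<M1. \<forall>s2<M2. \<forall>i<n.
           (\<lambda>(z1, z2, z3). sigX1 n g2 enc1 f2 s1 s2 z2 i) \<in> borel_measurable (noise \<sigma> n m)) \<and>
        (\<forall>s1<M1. \<forall>s2<M2.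
           err_event n m g1 g21m g2 g21s enc1 f2 f3 dec2 decBS s1 s2 \<inter> space (noise \<sigma> n m)
             \<in> sets (noise \<sigma> n m)) \<and>
        \<comment> \<open>power constraint of BS: E|X1|^2 \<le> P1 (block average, messages uniform)\<close>
        (\<Sum>s1<M1. \<Sum>s2<M2. \<Sum>i<n.
           (\<integral>\<^sup>+ (z1, z2, z3). ennreal ((sigX1 n g2 enc1 f2 s1 s2 z2 i)\<^sup>2) \<partial>noise \<sigma> n m))
          \<le> ennreal (real M1 * real M2 * real n * P1) \<and>
        \<comment> \<open>power constraint of M1: E|X2+X3|^2 \<le> P2 (total energy on both channels over block duration)\<close>
        (\<Sum>s2<M2. (\<Sum>i<n. (sigX2 n f2 s2 i)\<^sup>2) + (\<Sum>j<m. (sigX3 m f3 s2 j)\<^sup>2))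
          \<le> real M2 * real n * P2 \<and>
        \<comment> \<open>average error probability\<close>
        (\<Sum>s1<M1. \<Sum>s2<M2.
           measure (noise \<sigma> n m) (err_event n m g1 g21m g2 g21s enc1 f2 f3 dec2 decBS s1 s2
                                     \<inter> space (noise \<sigma> n m)))
          \<le> \<epsilon> * real M1 * real M2))"

text \<open>Achievable rate pairs (bits/s): for every eps > 0 and all sufficiently large n
there is a code with at least 2^(n R_k/(2 W_m)) messages (block duration n/(2 W_m) s)
and error probability at most eps.\<close>
definition achievable where
  "achievable Wm Ws g1 g21m g2 g21s \<sigma> P1 P2 R1 R2 \<longleftrightarrow>
     0 \<le> R1 \<and> 0 \<le> R2 \<and>
     (\<forall>\<epsilon>>0. \<exists>N. \<forall>n\<ge>N. \<exists>M1 M2.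
        2 powr (real n * R1 / (2 * Wm)) \<le> real M1 \<and>
        2 powr (real n * R2 / (2 * Wm)) \<le> real M2 \<and>
        is_code Wm Ws g1 g21m g2 g21s \<sigma> P1 P2 n M1 M2 \<epsilon>)"

definition capacity_region :: "real \<Rightarrow> real \<Rightarrow> real \<Rightarrow> real \<Rightarrow> real \<Rightarrow> real \<Rightarrow> real \<Rightarrow> real \<Rightarrow> real \<Rightarrow> (real \<times> real) set" where
  "capacity_region Wm Ws g1 g21m g2 g21s \<sigma> P1 P2 =
     closure {(R1, R2). achievable Wm Ws g1 g21m g2 g21s \<sigma> P1 P2 R1 R2}"

definition Cap :: "real \<Rightarrow> real \<Rightarrow> real" where
  "Cap Wm x = Wm * log 2 (1 + x)"

definition R_DC :: "real \<Rightarrow> real \<Rightarrow> real \<Rightarrow> real \<Rightarrow> real \<Rightarrow> (real \<times> real) set" where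
  "R_DC Wm Ws SNR1 SNR2 SNRs =
     (\<Union>lam\<in>{0..1}. {(R1, R2). R1 \<le> Cap Wm SNR1 \<and>
        R2 \<le> min (Ws * log 2 (1 + lam * SNRs / (Ws / Wm))) (Cap Wm ((1 - lam) * SNR2))})"

definition R_EC :: "real \<Rightarrow> real \<Rightarrow> real \<Rightarrow> real \<Rightarrow> real \<Rightarrow> (real \<times> real) set" where
  "R_EC Wm SNR1 SNR2 INR SNRs =
     (\<Union>K\<in>{0..}. {(R1, R2).
        R1 \<le> Cap Wm (SNR1 * (1 + K\<^sup>2 * SNRs / (1 + K)\<^sup>2)
                      / (1 + K\<^sup>2 * SNRs / (1 + K)\<^sup>2 + INR / (1 + K)\<^sup>2)) \<and>
        R2 \<le> Cap Wm (SNR2 / (1 + K)\<^sup>2)})"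

end

theory Submission
  imports Defs
begin

text \<open>Both inequalities follow from the cut-set bounds \<open>R\<^sub>1 \<le> C(SNR\<^sub>1)\<close> and
  \<open>R\<^sub>2 \<le> C(SNR\<^sub>2)\<close> on the capacity region, because halving the power costs at most
  \<open>W\<^sub>m \<le> (W\<^sub>m + W\<^sub>s)/2\<close> bits/s: the point \<open>\<lambda> = 1/2\<close> of \<open>\<R>\<^sub>D\<^sub>C\<close> and the point \<open>K = \<surd>2 - 1\<close>
  of \<open>\<R>\<^sub>E\<^sub>C\<close> achieve \<open>C(SNR\<^sub>1/2)\<close> and \<open>C(SNR\<^sub>2/2)\<close> under the respective hypotheses.

  Each cut-set bound is a strong converse for a point-to-point Gaussian channel, obtained by
  giving the receiver the other noise components as side information: the decoding sets of
  the messages, translated by their codewords, are then disjoint.  Comparing the noise with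
  the output distribution \<open>\<Q> = N(0, \<sigma>\<^sup>2 + P)\<^sup>n\<close> and splitting the likelihood ratio at level
  \<open>e\<^sup>\<gamma>\<close>, the total success probability of \<open>M\<close> codewords of energy at most \<open>nT\<close> is at most
  \<open>e\<^sup>\<gamma> + M e\<^sup>-\<^sup>s\<^sup>\<gamma> E\<^sub>\<Q>[(dP/d\<Q>)\<^sup>1\<^sup>+\<^sup>s]\<close>, and the Gaussian moment is explicit.  Letting \<open>n \<rightarrow> \<infinity>\<close>
  and then \<open>s, T - P \<rightarrow> 0\<close> gives \<open>R \<le> C(P/\<sigma>\<^sup>2)\<close>.\<close>

lemma ln_normal_density:
  "0 < \<sigma> \<Longrightarrow> ln (normal_density \<mu> \<sigma> y) = - ln (2*pi)/2 - ln \<sigma> - (y-\<mu>)\<^sup>2/(2*\<sigma>\<^sup>2)"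
  unfolding normal_density_def
  by (simp add: ln_div ln_sqrt real_sqrt_mult ln_mult ln_realpow)

definition tilted_precision :: "real \<Rightarrow> real \<Rightarrow> real \<Rightarrow> real" where
  "tilted_precision \<sigma> \<tau> s = (1+s)/\<sigma>\<^sup>2 - s/\<tau>\<^sup>2"

text \<open>\<open>\<integral> q (p/q)\<^sup>1\<^sup>+\<^sup>s = exp (lr_moment_const + lr_moment_coeff \<cdot> (x - c)\<^sup>2)\<close> for
  \<open>p = N(x, \<sigma>\<^sup>2)\<close> and \<open>q = N(c, \<tau>\<^sup>2)\<close>.\<close>

definition lr_moment_const :: "real \<Rightarrow> real \<Rightarrow> real \<Rightarrow> real" where
  "lr_moment_const \<sigma> \<tau> s = -(1+s)*ln \<sigma> + s*ln \<tau> - ln (tilted_precision \<sigma> \<tau> s)/2"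

definition lr_moment_coeff :: "real \<Rightarrow> real \<Rightarrow> real \<Rightarrow> real" where
  "lr_moment_coeff \<sigma> \<tau> s = s*(1+s)/(2*\<sigma>\<^sup>2*\<tau>\<^sup>2*tilted_precision \<sigma> \<tau> s)"

lemma tilted_precision_pos: "0 < \<sigma> \<Longrightarrow> \<sigma> \<le> \<tau> \<Longrightarrow> 0 \<le> s \<Longrightarrow> 0 < tilted_precision \<sigma> \<tau> s"
proof -
  assume a: "0 < \<sigma>" "\<sigma> \<le> \<tau>" "0 \<le> s"
  have "s/\<tau>\<^sup>2 \<le> s/\<sigma>\<^sup>2" using a by (intro divide_left_mono power_mono mult_pos_pos) auto
  moreover have "0 < 1/\<sigma>\<^sup>2" using a by auto
  ultimately show ?thesis unfolding tilted_precision_def add_divide_distrib by linarith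
qed

lemma lr_moment_coeff_nonneg: "0 < \<sigma> \<Longrightarrow> \<sigma> \<le> \<tau> \<Longrightarrow> 0 < s \<Longrightarrow> 0 \<le> lr_moment_coeff \<sigma> \<tau> s"
  unfolding lr_moment_coeff_def using tilted_precision_pos[of \<sigma> \<tau> s] by simp

lemma complete_square_tilted:
  fixes p q s x c y a :: real
  assumes "a \<noteq> 0" "a = (1+s)*p - s*q"
  shows "s*(1+s)*(x-c)\<^sup>2*p*q/(2*a) - a*(y - ((1+s)*p*x - s*q*c)/a)\<^sup>2/2
     = -(1+s)*(y-x)\<^sup>2*p/2 + s*(y-c)\<^sup>2*q/2"
proof -
  define b where "b = (1+s)*p*x - s*q*c"
  have square: "a*(y - b/a)\<^sup>2 = (a*y - b)\<^sup>2 / a"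
    using assms(1) by (simp add: field_simps power2_eq_square)
  have expand: "s*(1+s)*(x-c)\<^sup>2*p*q - (a*y - b)\<^sup>2 = a*(-(1+s)*(y-x)\<^sup>2*p + s*(y-c)\<^sup>2*q)"
    unfolding assms(2) b_def by algebra
  have "s*(1+s)*(x-c)\<^sup>2*p*q/(2*a) - a*(y - b/a)\<^sup>2/2
      = (s*(1+s)*(x-c)\<^sup>2*p*q - (a*y - b)\<^sup>2)/(2*a)"
    using assms(1) square by (simp add: field_simps power2_eq_square)
  also have "\<dots> = -(1+s)*(y-x)\<^sup>2*p/2 + s*(y-c)\<^sup>2*q/2"
    using assms(1) expand by (simp add: field_simps)
  finally show ?thesis unfolding b_def .
qed

lemma ln_lr_moment_integrand:
  fixes x c y :: real
  assumes "0 < \<sigma>" "\<sigma> \<le> \<tau>" "0 < s"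
  defines "\<alpha> \<equiv> tilted_precision \<sigma> \<tau> s"
  defines "m \<equiv> ((1+s)*x/\<sigma>\<^sup>2 - s*c/\<tau>\<^sup>2)/\<alpha>"
  shows "(1+s) * ln (normal_density x \<sigma> y) - s * ln (normal_density c \<tau> y)
       = lr_moment_const \<sigma> \<tau> s + lr_moment_coeff \<sigma> \<tau> s * (x - c)\<^sup>2
         + ln (normal_density m (1/sqrt \<alpha>) y)"
proof -
  have \<alpha>: "0 < \<alpha>" unfolding \<alpha>_def using assms tilted_precision_pos by auto
  have "\<alpha> = (1+s)*(1/\<sigma>\<^sup>2) - s*(1/\<tau>\<^sup>2)" unfolding \<alpha>_def tilted_precision_def by simp
  from complete_square_tilted[OF _ this, of x c y] \<alpha>
  have "s*(1+s)*(x-c)\<^sup>2*(1/\<sigma>\<^sup>2)*(1/\<tau>\<^sup>2)/(2*\<alpha>) - \<alpha>*(y-m)\<^sup>2/2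
      = -(1+s)*(y-x)\<^sup>2*(1/\<sigma>\<^sup>2)/2 + s*(y-c)\<^sup>2*(1/\<tau>\<^sup>2)/2"
    unfolding m_def by simp
  then have square: "-(1+s)*(y-x)\<^sup>2/(2*\<sigma>\<^sup>2) + s*(y-c)\<^sup>2/(2*\<tau>\<^sup>2)
      = lr_moment_coeff \<sigma> \<tau> s * (x - c)\<^sup>2 - \<alpha>*(y-m)\<^sup>2/2"
    unfolding lr_moment_coeff_def \<alpha>_def[symmetric] by simp
  have "(1+s) * ln (normal_density x \<sigma> y) - s * ln (normal_density c \<tau> y)
     = -ln(2*pi)/2 - (1+s)*ln \<sigma> + s*ln \<tau> + (-(1+s)*(y-x)\<^sup>2/(2*\<sigma>\<^sup>2) + s*(y-c)\<^sup>2/(2*\<tau>\<^sup>2))"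
    using assms(1,2) by (simp add: ln_normal_density algebra_simps add_divide_distrib diff_divide_distrib)
  moreover have "ln (normal_density m (1/sqrt \<alpha>) y) = - ln (2*pi)/2 + ln \<alpha>/2 - \<alpha>*(y-m)\<^sup>2/2"
    using \<alpha> by (simp add: ln_normal_density ln_div ln_sqrt power_divide)
  ultimately show ?thesis
    unfolding square lr_moment_const_def \<alpha>_def[symmetric] by (simp add: algebra_simps)
qed

lemma normal_density_lr_powr:
  fixes x c y :: real
  assumes "0 < \<sigma>" "\<sigma> \<le> \<tau>" "0 < s"
  defines "\<alpha> \<equiv> tilted_precision \<sigma> \<tau> s"
  defines "m \<equiv> ((1+s)*x/\<sigma>\<^sup>2 - s*c/\<tau>\<^sup>2)/\<alpha>"
  shows "normal_density c \<tau> y * (normal_density x \<sigma> y / normal_density c \<tau> y) powr (1+s)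
       = exp (lr_moment_const \<sigma> \<tau> s + lr_moment_coeff \<sigma> \<tau> s * (x - c)\<^sup>2) * normal_density m (1/sqrt \<alpha>) y"
proof -
  have \<alpha>: "0 < \<alpha>" unfolding \<alpha>_def using assms tilted_precision_pos by auto
  have pos: "0 < normal_density c \<tau> y" "0 < normal_density x \<sigma> y" "0 < normal_density m (1/sqrt \<alpha>) y"
    using assms \<alpha> by (auto intro!: normal_density_pos)
  have "ln (normal_density c \<tau> y * (normal_density x \<sigma> y / normal_density c \<tau> y) powr (1+s))
     = (1+s) * ln (normal_density x \<sigma> y) - s * ln (normal_density c \<tau> y)"
    using pos by (simp add: ln_mult ln_powr ln_div algebra_simps)
  also have "\<dots> = ln (exp (lr_moment_const \<sigma> \<tau> s + lr_moment_coeff \<sigma> \<tau> s * (x - c)\<^sup>2)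
                     * normal_density m (1/sqrt \<alpha>) y)"
    using ln_lr_moment_integrand[OF assms(1-3)] pos unfolding \<alpha>_def m_def
    by (simp add: ln_mult)
  finally show ?thesis using pos by simp
qed

lemma nn_integral_lr_powr:
  fixes x c :: real
  assumes "0 < \<sigma>" "\<sigma> \<le> \<tau>" "0 < s"
  shows "(\<integral>\<^sup>+y. ennreal ((normal_density x \<sigma> y / normal_density c \<tau> y) powr (1+s))
            \<partial>density lborel (normal_density c \<tau>))
     = ennreal (exp (lr_moment_const \<sigma> \<tau> s + lr_moment_coeff \<sigma> \<tau> s * (x - c)\<^sup>2))"
proof -
  define \<alpha> where "\<alpha> = tilted_precision \<sigma> \<tau> s"
  define m where "m = ((1+s)*x/\<sigma>\<^sup>2 - s*c/\<tau>\<^sup>2)/\<alpha>"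
  have \<alpha>: "0 < \<alpha>" unfolding \<alpha>_def using assms tilted_precision_pos by auto
  have "(\<integral>\<^sup>+y. ennreal ((normal_density x \<sigma> y / normal_density c \<tau> y) powr (1+s))
            \<partial>density lborel (normal_density c \<tau>))
     = (\<integral>\<^sup>+y. ennreal (normal_density c \<tau> y * (normal_density x \<sigma> y / normal_density c \<tau> y) powr (1+s)) \<partial>lborel)"
    by (subst nn_integral_density) (auto simp: ennreal_mult')
  also have "\<dots> = (\<integral>\<^sup>+y. ennreal (exp (lr_moment_const \<sigma> \<tau> s + lr_moment_coeff \<sigma> \<tau> s * (x - c)\<^sup>2))
                        * ennreal (normal_density m (1/sqrt \<alpha>) y) \<partial>lborel)"
    using assms unfolding \<alpha>_def m_def by (simp add: normal_density_lr_powr ennreal_mult')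
  also have "\<dots> = ennreal (exp (lr_moment_const \<sigma> \<tau> s + lr_moment_coeff \<sigma> \<tau> s * (x - c)\<^sup>2))"
    using \<alpha> by (subst nn_integral_cmult) (auto simp: nn_integral_eq_integral)
  finally show ?thesis .
qed

lemma prob_space_gauss: "0 < \<sigma> \<Longrightarrow> prob_space (gauss \<sigma>)"
  unfolding gauss_def by (rule prob_space_normal_density)

lemma sets_gauss[simp, measurable_cong]: "sets (gauss \<sigma>) = sets borel"
  unfolding gauss_def by simp

lemma space_gauss[simp]: "space (gauss \<sigma>) = UNIV"
  unfolding gauss_def by simp

lemma nn_integral_density_ratio_indicator:
  fixes x c :: real
  assumes "0 < \<tau>" "A \<in> sets borel"
  shows "(\<integral>\<^sup>+y. ennreal (normal_density x \<sigma> y / normal_density c \<tau> y) * indicator A y \<partial>density lborel (normal_density c \<tau>))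
     = emeasure (density lborel (normal_density x \<sigma>)) A"
proof -
  have "(\<integral>\<^sup>+y. ennreal (normal_density x \<sigma> y / normal_density c \<tau> y) * indicator A y \<partial>density lborel (normal_density c \<tau>))
     = (\<integral>\<^sup>+y. ennreal (normal_density c \<tau> y) * (ennreal (normal_density x \<sigma> y / normal_density c \<tau> y) * indicator A y) \<partial>lborel)"
    using assms by (subst nn_integral_density) auto
  also have "\<dots> = (\<integral>\<^sup>+y. ennreal (normal_density x \<sigma> y) * indicator A y \<partial>lborel)"
  proof (intro nn_integral_cong)
    fix y
    have "0 < normal_density c \<tau> y" using assms by (intro normal_density_pos)
    then show "ennreal (normal_density c \<tau> y) * (ennreal (normal_density x \<sigma> y / normal_density c \<tau> y) * indicator A y)
       = ennreal (normal_density x \<sigma> y) * indicator A y"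
      by (simp add: ennreal_mult'[symmetric] mult.assoc[symmetric])
  qed
  also have "\<dots> = emeasure (density lborel (normal_density x \<sigma>)) A"
    using assms by (subst emeasure_density) auto
  finally show ?thesis .
qed

lemma emeasure_gauss_shift:
  assumes "0 < \<sigma>" "A \<in> sets borel"
  shows "emeasure (gauss \<sigma>) ((\<lambda>z. z + x) -` A \<inter> space (gauss \<sigma>)) = emeasure (density lborel (normal_density x \<sigma>)) A"
proof -
  have "emeasure (density lborel (normal_density x \<sigma>)) A = (\<integral>\<^sup>+y. ennreal (normal_density x \<sigma> y) * indicator A y \<partial>lborel)"
    using assms by (subst emeasure_density) auto
  also have "\<dots> = (\<integral>\<^sup>+z. ennreal (normal_density x \<sigma> (x + 1 * z)) * indicator A (x + 1 * z) \<partial>lborel)"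
    using assms by (subst nn_integral_real_affine[where c=1 and t=x]) auto
  also have "\<dots> = (\<integral>\<^sup>+z. ennreal (normal_density 0 \<sigma> z) * indicator ((\<lambda>z. z + x) -` A \<inter> space (gauss \<sigma>)) z \<partial>lborel)"
    by (intro nn_integral_cong) (auto simp: normal_density_def gauss_def indicator_def add.commute)
  also have "\<dots> = emeasure (gauss \<sigma>) ((\<lambda>z. z + x) -` A \<inter> space (gauss \<sigma>))"
  proof -
    have "(\<lambda>z. z + x) -` A \<inter> space borel \<in> sets borel"
      using assms(2) by (intro measurable_sets[of _ borel]) auto
    then show ?thesis unfolding gauss_def using assms by (subst emeasure_density) auto
  qed
  finally show ?thesis ..
qed

lemma distr_PiM_gauss_shift:
  fixes d :: "nat \<Rightarrow> real"
  assumes "0 < \<sigma>"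
  shows "distr (PiM {..<n} (\<lambda>_. gauss \<sigma>)) (PiM {..<n} (\<lambda>_. borel)) (\<lambda>z. \<lambda>i\<in>{..<n}. z i + d i)
       = PiM {..<n} (\<lambda>i. density lborel (normal_density (d i) \<sigma>))"
proof -
  interpret G: product_prob_space "\<lambda>_::nat. gauss \<sigma>"
    using assms by (intro product_prob_spaceI prob_space_gauss)
  interpret N: product_prob_space "\<lambda>i. density lborel (normal_density (d i) \<sigma>)"
    using assms by (intro product_prob_spaceI prob_space_normal_density)
  have meas: "(\<lambda>z. \<lambda>i\<in>{..<n}. z i + d i) \<in> PiM {..<n} (\<lambda>_. gauss \<sigma>) \<rightarrow>\<^sub>M PiM {..<n} (\<lambda>_. borel)"
    by (intro measurable_restrict) (measurable)
  show ?thesis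
  proof (rule N.PiM_eqI)
    show "sets (distr (PiM {..<n} (\<lambda>_. gauss \<sigma>)) (PiM {..<n} (\<lambda>_. borel)) (\<lambda>z. \<lambda>i\<in>{..<n}. z i + d i))
       = sets (PiM {..<n} (\<lambda>i. density lborel (normal_density (d i) \<sigma>)))"
      by (simp, intro sets_PiM_cong) auto
  next
    fix A assume A: "\<And>i. i \<in> {..<n} \<Longrightarrow> A i \<in> sets (density lborel (normal_density (d i) \<sigma>))"
    then have Ab: "\<And>i. i \<in> {..<n} \<Longrightarrow> A i \<in> sets borel" by simp
    have "emeasure (distr (PiM {..<n} (\<lambda>_. gauss \<sigma>)) (PiM {..<n} (\<lambda>_. borel)) (\<lambda>z. \<lambda>i\<in>{..<n}. z i + d i)) (PiE {..<n} A)
      = emeasure (PiM {..<n} (\<lambda>_. gauss \<sigma>)) ((\<lambda>z. \<lambda>i\<in>{..<n}. z i + d i) -` PiE {..<n} A \<inter> space (PiM {..<n} (\<lambda>_. gauss \<sigma>)))"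
      using Ab by (intro emeasure_distr meas sets_PiM_I_finite) auto
    also have "(\<lambda>z. \<lambda>i\<in>{..<n}. z i + d i) -` PiE {..<n} A \<inter> space (PiM {..<n} (\<lambda>_. gauss \<sigma>))
       = PiE {..<n} (\<lambda>i. (\<lambda>z. z + d i) -` A i \<inter> space (gauss \<sigma>))"
      by (auto simp: space_PiM PiE_def Pi_def extensional_def)
    also have "emeasure (PiM {..<n} (\<lambda>_. gauss \<sigma>)) \<dots> = (\<Prod>i<n. emeasure (gauss \<sigma>) ((\<lambda>z. z + d i) -` A i \<inter> space (gauss \<sigma>)))"
    proof (intro G.emeasure_PiM)
      fix i assume "i \<in> {..<n}"
      then have "A i \<in> sets borel" using Ab by auto
      then have "(\<lambda>z. z + d i) -` A i \<inter> space borel \<in> sets borel"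
        by (intro measurable_sets[of _ borel]) auto
      then show "(\<lambda>z. z + d i) -` A i \<inter> space (gauss \<sigma>) \<in> sets (gauss \<sigma>)" by simp
    qed simp
    also have "\<dots> = (\<Prod>i<n. emeasure (density lborel (normal_density (d i) \<sigma>)) (A i))"
      using Ab assms by (intro prod.cong emeasure_gauss_shift) auto
    finally show "emeasure (distr (PiM {..<n} (\<lambda>_. gauss \<sigma>)) (PiM {..<n} (\<lambda>_. borel)) (\<lambda>z. \<lambda>i\<in>{..<n}. z i + d i)) (PiE {..<n} A)
      = (\<Prod>i<n. emeasure (density lborel (normal_density (d i) \<sigma>)) (A i))" .
  qed simp
qed

lemma density_PiM_normal_ratio:
  fixes d c :: "'i \<Rightarrow> real"
  assumes "0 < \<tau>" "finite I" "0 < \<sigma>"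
  shows "density (PiM I (\<lambda>i. density lborel (normal_density (c i) \<tau>)))
            (\<lambda>y. \<Prod>i\<in>I. ennreal (normal_density (d i) \<sigma> (y i) / normal_density (c i) \<tau> (y i)))
       = PiM I (\<lambda>i. density lborel (normal_density (d i) \<sigma>))"
proof -
  interpret Q: product_prob_space "\<lambda>i. density lborel (normal_density (c i) \<tau>)"
    using assms by (intro product_prob_spaceI prob_space_normal_density)
  interpret N: product_prob_space "\<lambda>i. density lborel (normal_density (d i) \<sigma>)"
    using assms by (intro product_prob_spaceI prob_space_normal_density)
  show ?thesis
  proof (rule N.PiM_eqI)
    show "finite I" by fact
    show "sets (density (PiM I (\<lambda>i. density lborel (normal_density (c i) \<tau>)))
            (\<lambda>y. \<Prod>i\<in>I. ennreal (normal_density (d i) \<sigma> (y i) / normal_density (c i) \<tau> (y i))))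
       = sets (PiM I (\<lambda>i. density lborel (normal_density (d i) \<sigma>)))"
      by (simp, intro sets_PiM_cong) auto
  next
    fix A assume A: "\<And>i. i \<in> I \<Longrightarrow> A i \<in> sets (density lborel (normal_density (d i) \<sigma>))"
    then have Ab: "\<And>i. i \<in> I \<Longrightarrow> A i \<in> sets borel" by simp
    have PA: "PiE I A \<in> sets (PiM I (\<lambda>i. density lborel (normal_density (c i) \<tau>)))"
      using Ab assms by (intro sets_PiM_I_finite) auto
    have "emeasure (density (PiM I (\<lambda>i. density lborel (normal_density (c i) \<tau>)))
            (\<lambda>y. \<Prod>i\<in>I. ennreal (normal_density (d i) \<sigma> (y i) / normal_density (c i) \<tau> (y i)))) (PiE I A)
      = (\<integral>\<^sup>+y. (\<Prod>i\<in>I. ennreal (normal_density (d i) \<sigma> (y i) / normal_density (c i) \<tau> (y i))) * indicator (PiE I A) y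
           \<partial>PiM I (\<lambda>i. density lborel (normal_density (c i) \<tau>)))"
      using PA by (subst emeasure_density) auto
    also have "\<dots> = (\<integral>\<^sup>+y. (\<Prod>i\<in>I. ennreal (normal_density (d i) \<sigma> (y i) / normal_density (c i) \<tau> (y i)) * indicator (A i) (y i))
           \<partial>PiM I (\<lambda>i. density lborel (normal_density (c i) \<tau>)))"
    proof (intro nn_integral_cong)
      fix y assume "y \<in> space (PiM I (\<lambda>i. density lborel (normal_density (c i) \<tau>)))"
      then have y: "y \<in> PiE I (\<lambda>_. UNIV)" by (simp add: space_PiM)
      show "(\<Prod>i\<in>I. ennreal (normal_density (d i) \<sigma> (y i) / normal_density (c i) \<tau> (y i))) * indicator (PiE I A) y
         = (\<Prod>i\<in>I. ennreal (normal_density (d i) \<sigma> (y i) / normal_density (c i) \<tau> (y i)) * indicator (A i) (y i))"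
      proof (cases "y \<in> PiE I A")
        case True
        then show ?thesis by (auto simp: prod.distrib indicator_def PiE_def Pi_def intro!: prod.cong)
      next
        case False
        with y obtain i where "i \<in> I" "y i \<notin> A i" by (auto simp: PiE_def Pi_def)
        with assms(2) False show ?thesis
          by (auto simp: indicator_def intro!: prod_zero bexI[of _ i])
      qed
    qed
    also have "\<dots> = (\<Prod>i\<in>I. \<integral>\<^sup>+y. ennreal (normal_density (d i) \<sigma> y / normal_density (c i) \<tau> y) * indicator (A i) y
           \<partial>density lborel (normal_density (c i) \<tau>))"
      using Ab assms by (intro Q.product_nn_integral_prod) auto
    also have "\<dots> = (\<Prod>i\<in>I. emeasure (density lborel (normal_density (d i) \<sigma>)) (A i))"
      using Ab assms by (intro prod.cong nn_integral_density_ratio_indicator) auto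
    finally show "emeasure (density (PiM I (\<lambda>i. density lborel (normal_density (c i) \<tau>)))
            (\<lambda>y. \<Prod>i\<in>I. ennreal (normal_density (d i) \<sigma> (y i) / normal_density (c i) \<tau> (y i)))) (PiE I A)
      = (\<Prod>i\<in>I. emeasure (density lborel (normal_density (d i) \<sigma>)) (A i))" .
  qed
qed

lemma emeasure_PiM_gauss_change:
  fixes x c :: "nat \<Rightarrow> real"
  assumes \<sigma>: "0 < \<sigma>" and \<tau>: "0 < \<tau>" and E: "E \<in> sets (PiM {..<n} (\<lambda>_. gauss \<sigma>))"
  defines "Q \<equiv> PiM {..<n} (\<lambda>i. density lborel (normal_density (c i) \<tau>))"
  defines "D \<equiv> (\<lambda>y. \<lambda>i\<in>{..<n}. y i - x i) -` E \<inter> space Q"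
  shows "D \<in> sets Q"
    and "emeasure (PiM {..<n} (\<lambda>_. gauss \<sigma>)) E
       = (\<integral>\<^sup>+y. ennreal (\<Prod>i<n. normal_density (x i) \<sigma> (y i) / normal_density (c i) \<tau> (y i))
              * indicator D y \<partial>Q)"
proof -
  define G where "G = PiM {..<n} (\<lambda>_. gauss \<sigma>)"
  define shift where "shift = (\<lambda>z. \<lambda>i\<in>{..<n}. z i + x i)"
  have sQ: "sets Q = sets (PiM {..<n} (\<lambda>_. borel))" unfolding Q_def by (intro sets_PiM_cong) auto
  have sG: "sets G = sets (PiM {..<n} (\<lambda>_. borel))" unfolding G_def by (intro sets_PiM_cong) auto
  have spaces: "space Q = space (PiM {..<n} (\<lambda>_. borel :: real measure))"
    "space G = space (PiM {..<n} (\<lambda>_. borel :: real measure))"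
    using sets_eq_imp_space_eq[OF sQ] sets_eq_imp_space_eq[OF sG] by auto
  have "(\<lambda>y. \<lambda>i\<in>{..<n}. y i - x i) \<in> Q \<rightarrow>\<^sub>M G"
    unfolding measurable_cong_sets[OF sQ sG] by (intro measurable_restrict) measurable
  then show D: "D \<in> sets Q" unfolding D_def using E G_def by (intro measurable_sets) auto
  have shift_meas: "shift \<in> G \<rightarrow>\<^sub>M PiM {..<n} (\<lambda>_. borel)"
    unfolding shift_def measurable_cong_sets[OF sG refl] by (intro measurable_restrict) measurable
  have unshift: "(\<lambda>i\<in>{..<n}. shift z i - x i) = z" if "z \<in> space G" for z
    using that unfolding shift_def spaces by (auto simp: space_PiM PiE_def extensional_def fun_eq_iff)
  have "shift z \<in> space Q" for z unfolding shift_def spaces by (simp add: space_PiM)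
  with unshift sets.sets_into_space[OF E] have "shift -` D \<inter> space G = E"
    unfolding D_def G_def[symmetric] by auto
  then have "emeasure G E = emeasure (distr G (PiM {..<n} (\<lambda>_. borel)) shift) D"
    using D sQ by (subst emeasure_distr[OF shift_meas]) auto
  also have "distr G (PiM {..<n} (\<lambda>_. borel)) shift
      = density Q (\<lambda>y. \<Prod>i\<in>{..<n}. ennreal (normal_density (x i) \<sigma> (y i) / normal_density (c i) \<tau> (y i)))"
    unfolding G_def shift_def Q_def
    by (simp add: distr_PiM_gauss_shift[OF \<sigma>] density_PiM_normal_ratio[OF \<tau> _ \<sigma>])
  also have "emeasure \<dots> D = (\<integral>\<^sup>+y. ennreal (\<Prod>i<n. normal_density (x i) \<sigma> (y i) / normal_density (c i) \<tau> (y i))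
              * indicator D y \<partial>Q)"
    using D unfolding Q_def by (subst emeasure_density) (auto simp: prod_ennreal)
  finally show "emeasure (PiM {..<n} (\<lambda>_. gauss \<sigma>)) E = \<dots>" unfolding G_def .
qed

lemma mult_indicator_le_split:
  fixes r g s :: real
  assumes "0 \<le> r" "0 < s"
  shows "r * indicator D y \<le> exp g * indicator D y + exp (-s*g) * r powr (1+s)"
proof (cases "r \<le> exp g")
  case True
  then show ?thesis using assms
    by (auto simp: indicator_def intro!: add_increasing2 mult_nonneg_nonneg)
next
  case False
  then have rp: "0 < r" "exp g < r" using exp_gt_zero[of g] by linarith+
  have "exp (s*g) \<le> r powr s"
  proof -
    have "exp (s*g) = (exp g) powr s" by (simp add: powr_def)
    also have "\<dots> \<le> r powr s" using rp assms by (intro powr_mono2) auto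
    finally show ?thesis .
  qed
  then have "r \<le> exp (-s*g) * r powr (1+s)"
    using rp by (simp add: powr_add exp_minus field_simps)
  moreover have "r * indicator D y \<le> r" using rp by (simp add: indicator_def)
  ultimately show ?thesis using assms by (auto simp: indicator_def intro: add_increasing)
qed

lemma nn_integral_lr_indicator_le:
  fixes x c :: "nat \<Rightarrow> real" and n :: nat
  assumes \<sigma>: "0 < \<sigma>" "\<sigma> \<le> \<tau>" and s: "0 < s"
  defines "Q \<equiv> PiM {..<n} (\<lambda>i. density lborel (normal_density (c i) \<tau>))"
  assumes D: "D \<in> sets Q"
  shows "(\<integral>\<^sup>+y. ennreal (\<Prod>i<n. normal_density (x i) \<sigma> (y i) / normal_density (c i) \<tau> (y i))
              * indicator D y \<partial>Q)
     \<le> ennreal (exp \<gamma>) * emeasure Q D + ennreal (exp (-s*\<gamma>))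
        * ennreal (exp (real n * lr_moment_const \<sigma> \<tau> s
                        + lr_moment_coeff \<sigma> \<tau> s * (\<Sum>i<n. (x i - c i)\<^sup>2)))"
proof -
  have \<tau>: "0 < \<tau>" using \<sigma> by auto
  interpret product_prob_space "\<lambda>i. density lborel (normal_density (c i) \<tau>)"
    using \<tau> by (intro product_prob_spaceI prob_space_normal_density)
  define ratio where "ratio i y = normal_density (x i) \<sigma> y / normal_density (c i) \<tau> y" for i y
  have "(\<integral>\<^sup>+y. ennreal (\<Prod>i<n. ratio i (y i)) * indicator D y \<partial>Q)
     \<le> (\<integral>\<^sup>+y. ennreal (exp \<gamma>) * indicator D y
              + ennreal (exp (-s*\<gamma>)) * (\<Prod>i<n. ennreal (ratio i (y i) powr (1+s))) \<partial>Q)"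
  proof (intro nn_integral_mono)
    fix y
    have "(\<Prod>i<n. ratio i (y i)) * indicator D y
        \<le> exp \<gamma> * indicator D y + exp (-s*\<gamma>) * (\<Prod>i<n. ratio i (y i)) powr (1+s)"
      using s by (intro mult_indicator_le_split prod_nonneg) (auto simp: ratio_def)
    then show "ennreal (\<Prod>i<n. ratio i (y i)) * indicator D y
        \<le> ennreal (exp \<gamma>) * indicator D y + ennreal (exp (-s*\<gamma>)) * (\<Prod>i<n. ennreal (ratio i (y i) powr (1+s)))"
      by (cases "y \<in> D")
         (auto simp: ratio_def prod_powr_distrib prod_ennreal ennreal_mult'[symmetric]
            ennreal_plus[symmetric] prod_nonneg simp del: ennreal_plus intro!: ennreal_leI)
  qed
  also have "\<dots> = ennreal (exp \<gamma>) * emeasure Q D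
      + ennreal (exp (-s*\<gamma>)) * (\<integral>\<^sup>+y. (\<Prod>i<n. ennreal (ratio i (y i) powr (1+s))) \<partial>Q)"
    using D by (subst nn_integral_add) (auto simp: nn_integral_cmult Q_def ratio_def)
  also have "(\<integral>\<^sup>+y. (\<Prod>i<n. ennreal (ratio i (y i) powr (1+s))) \<partial>Q)
      = (\<Prod>i<n. ennreal (exp (lr_moment_const \<sigma> \<tau> s + lr_moment_coeff \<sigma> \<tau> s * (x i - c i)\<^sup>2)))"
    unfolding Q_def ratio_def
    by (subst product_nn_integral_prod) (auto simp: nn_integral_lr_powr[OF \<sigma> s])
  also have "\<dots> = ennreal (exp (real n * lr_moment_const \<sigma> \<tau> s
                        + lr_moment_coeff \<sigma> \<tau> s * (\<Sum>i<n. (x i - c i)\<^sup>2)))"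
    by (simp add: prod_ennreal exp_sum[symmetric] sum.distrib sum_distrib_left)
  finally show ?thesis unfolding ratio_def .
qed

text \<open>The translates \<open>x a + E a\<close> of the decoding sets are disjoint; comparing each shifted
  Gaussian with the output measure \<open>\<Q>\<close> turns the total success probability into a sum of
  \<open>\<Q>\<close>-integrals over disjoint sets.\<close>

lemma sum_emeasure_decoding_sets_le_lr_moments:
  fixes n :: nat and A :: "'a set" and x :: "'a \<Rightarrow> nat \<Rightarrow> real" and c :: "nat \<Rightarrow> real"
    and E :: "'a \<Rightarrow> (nat \<Rightarrow> real) set"
  assumes \<sigma>: "0 < \<sigma>" "\<sigma> \<le> \<tau>" and s: "0 < s" and fin: "finite A"
    and E: "\<And>a. a \<in> A \<Longrightarrow> E a \<in> sets (PiM {..<n} (\<lambda>_. gauss \<sigma>))"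
    and disj: "\<And>a a' z z'. a \<in> A \<Longrightarrow> a' \<in> A \<Longrightarrow> z \<in> E a \<Longrightarrow> z' \<in> E a' \<Longrightarrow>
               (\<And>i. i < n \<Longrightarrow> x a i + z i = x a' i + z' i) \<Longrightarrow> a = a'"
  shows "(\<Sum>a\<in>A. emeasure (PiM {..<n} (\<lambda>_. gauss \<sigma>)) (E a))
     \<le> ennreal (exp \<gamma>) + ennreal (exp (-s*\<gamma>)) * (\<Sum>a\<in>A. ennreal (exp (real n * lr_moment_const \<sigma> \<tau> s
                        + lr_moment_coeff \<sigma> \<tau> s * (\<Sum>i<n. (x a i - c i)\<^sup>2))))"
proof -
  have \<tau>: "0 < \<tau>" using \<sigma> by auto
  define Q where "Q = PiM {..<n} (\<lambda>i. density lborel (normal_density (c i) \<tau>))"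
  define D where "D a = (\<lambda>y. \<lambda>i\<in>{..<n}. y i - x a i) -` E a \<inter> space Q" for a
  interpret Q: prob_space Q unfolding Q_def using \<tau> by (intro prob_space_PiM prob_space_normal_density)
  have change: "D a \<in> sets Q" "emeasure (PiM {..<n} (\<lambda>_. gauss \<sigma>)) (E a) = (\<integral>\<^sup>+y. ennreal
      (\<Prod>i<n. normal_density (x a i) \<sigma> (y i) / normal_density (c i) \<tau> (y i)) * indicator (D a) y \<partial>Q)"
    if "a \<in> A" for a
    using emeasure_PiM_gauss_change[OF \<sigma>(1) \<tau> E[OF that], where x="x a" and c=c]
    unfolding D_def Q_def by auto
  have "disjoint_family_on D A"
    unfolding disjoint_family_on_def
  proof (intro ballI impI, rule ccontr)
    fix a a' assume aa: "a \<in> A" "a' \<in> A" "a \<noteq> a'" "D a \<inter> D a' \<noteq> {}"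
    then obtain y where "y \<in> D a" "y \<in> D a'" by auto
    then have "a = a'"
      by (intro disj[OF aa(1,2), of "\<lambda>i\<in>{..<n}. y i - x a i" "\<lambda>i\<in>{..<n}. y i - x a' i"])
         (auto simp: D_def)
    with aa show False by simp
  qed
  then have "(\<Sum>a\<in>A. emeasure Q (D a)) = emeasure Q (\<Union>a\<in>A. D a)"
    using change(1) fin by (intro sum_emeasure) auto
  also have "\<dots> \<le> 1" by (rule Q.emeasure_le_1)
  finally have sum_le_1: "(\<Sum>a\<in>A. emeasure Q (D a)) \<le> 1" .
  have "(\<Sum>a\<in>A. emeasure (PiM {..<n} (\<lambda>_. gauss \<sigma>)) (E a))
      \<le> (\<Sum>a\<in>A. ennreal (exp \<gamma>) * emeasure Q (D a) + ennreal (exp (-s*\<gamma>)) * ennreal (exp (real n *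
            lr_moment_const \<sigma> \<tau> s + lr_moment_coeff \<sigma> \<tau> s * (\<Sum>i<n. (x a i - c i)\<^sup>2))))"
  proof (intro sum_mono)
    fix a assume "a \<in> A"
    then show "emeasure (PiM {..<n} (\<lambda>_. gauss \<sigma>)) (E a) \<le> ennreal (exp \<gamma>) * emeasure Q (D a)
      + ennreal (exp (-s*\<gamma>)) * ennreal (exp (real n * lr_moment_const \<sigma> \<tau> s
                        + lr_moment_coeff \<sigma> \<tau> s * (\<Sum>i<n. (x a i - c i)\<^sup>2)))"
      unfolding change(2)[OF \<open>a \<in> A\<close>] Q_def
      by (intro nn_integral_lr_indicator_le[OF \<sigma> s]) (use change(1) in \<open>auto simp: Q_def\<close>)
  qed
  also have "\<dots> = ennreal (exp \<gamma>) * (\<Sum>a\<in>A. emeasure Q (D a)) + ennreal (exp (-s*\<gamma>)) * (\<Sum>a\<in>A.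
      ennreal (exp (real n * lr_moment_const \<sigma> \<tau> s + lr_moment_coeff \<sigma> \<tau> s * (\<Sum>i<n. (x a i - c i)\<^sup>2))))"
    by (simp only: sum.distrib sum_distrib_left)
  also have "\<dots> \<le> ennreal (exp \<gamma>) * 1 + ennreal (exp (-s*\<gamma>)) * (\<Sum>a\<in>A. ennreal (exp (real n *
            lr_moment_const \<sigma> \<tau> s + lr_moment_coeff \<sigma> \<tau> s * (\<Sum>i<n. (x a i - c i)\<^sup>2))))"
    using sum_le_1 by (intro add_mono mult_left_mono) auto
  finally show ?thesis by simp
qed

lemma prob_space_PiM_gauss: "0 < \<sigma> \<Longrightarrow> prob_space (PiM I (\<lambda>_. gauss \<sigma>))"
  by (intro prob_space_PiM prob_space_gauss)

text \<open>Codewords of energy above \<open>nT\<close> are counted as decoded correctly; by Markov's inequality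
  there are few of them.\<close>

lemma sum_emeasure_decoding_sets_le_energy:
  fixes n :: nat and A :: "'a set" and x :: "'a \<Rightarrow> nat \<Rightarrow> real" and c :: "nat \<Rightarrow> real"
    and E :: "'a \<Rightarrow> (nat \<Rightarrow> real) set"
  assumes \<sigma>: "0 < \<sigma>" "\<sigma> \<le> \<tau>" and s: "0 < s" and fin: "finite A" and n: "0 < n" and T: "0 < T"
    and E: "\<And>a. a \<in> A \<Longrightarrow> E a \<in> sets (PiM {..<n} (\<lambda>_. gauss \<sigma>))"
    and disj: "\<And>a a' z z'. a \<in> A \<Longrightarrow> a' \<in> A \<Longrightarrow> z \<in> E a \<Longrightarrow> z' \<in> E a' \<Longrightarrow>
               (\<And>i. i < n \<Longrightarrow> x a i + z i = x a' i + z' i) \<Longrightarrow> a = a'"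
  shows "(\<Sum>a\<in>A. emeasure (PiM {..<n} (\<lambda>_. gauss \<sigma>)) (E a))
     \<le> ennreal ((\<Sum>a\<in>A. \<Sum>i<n. (x a i - c i)\<^sup>2) / (real n * T) + exp \<gamma>
        + exp (-s*\<gamma>) * card A * exp (real n * (lr_moment_const \<sigma> \<tau> s + lr_moment_coeff \<sigma> \<tau> s * T)))"
proof -
  define G where "G = PiM {..<n} (\<lambda>_. gauss \<sigma>)"
  interpret G: prob_space G unfolding G_def using \<sigma>(1) by (rule prob_space_PiM_gauss)
  define energy where "energy a = (\<Sum>i<n. (x a i - c i)\<^sup>2)" for a
  define bound where "bound = exp (real n * (lr_moment_const \<sigma> \<tau> s + lr_moment_coeff \<sigma> \<tau> s * T))"
  define B where "B = {a\<in>A. real n * T < energy a}"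
  have nT: "0 < real n * T" using n T by simp
  have fin': "finite B" "finite (A - B)" using fin unfolding B_def by auto
  have "(\<Sum>a\<in>B. measure G (E a)) \<le> (\<Sum>a\<in>B. energy a / (real n * T))"
    using nT by (intro sum_mono) (auto simp: B_def order.trans[OF G.prob_le_1])
  also have "\<dots> \<le> (\<Sum>a\<in>A. energy a) / (real n * T)"
    unfolding sum_divide_distrib[symmetric] using fin nT
    by (intro divide_right_mono sum_mono2) (auto simp: B_def energy_def intro: sum_nonneg)
  finally have bad: "(\<Sum>a\<in>B. measure G (E a)) \<le> (\<Sum>a\<in>A. energy a) / (real n * T)" .
  have "ennreal (\<Sum>a\<in>A - B. measure G (E a)) = (\<Sum>a\<in>A - B. emeasure G (E a))"
    by (simp add: G.emeasure_eq_measure sum_ennreal)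
  also have "\<dots> \<le> ennreal (exp \<gamma>) + ennreal (exp (-s*\<gamma>)) * (\<Sum>a\<in>A - B. ennreal (exp (real n
      * lr_moment_const \<sigma> \<tau> s + lr_moment_coeff \<sigma> \<tau> s * energy a)))"
    unfolding G_def energy_def
    by (rule sum_emeasure_decoding_sets_le_lr_moments[OF \<sigma> s fin'(2)]) (auto intro: E disj)
  also have "\<dots> \<le> ennreal (exp \<gamma>) + ennreal (exp (-s*\<gamma>)) * (\<Sum>a\<in>A - B. ennreal bound)"
  proof (intro add_mono mult_left_mono sum_mono ennreal_leI order.refl)
    fix a assume "a \<in> A - B"
    then have "lr_moment_coeff \<sigma> \<tau> s * energy a \<le> lr_moment_coeff \<sigma> \<tau> s * (real n * T)"
      using lr_moment_coeff_nonneg[OF \<sigma> s] by (intro mult_left_mono) (auto simp: B_def)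
    then show "exp (real n * lr_moment_const \<sigma> \<tau> s + lr_moment_coeff \<sigma> \<tau> s * energy a) \<le> bound"
      unfolding bound_def by (simp add: algebra_simps)
  qed auto
  also have "\<dots> \<le> ennreal (exp \<gamma>) + ennreal (exp (-s*\<gamma>)) * (\<Sum>a\<in>A. ennreal bound)"
    using fin by (intro add_mono mult_left_mono sum_mono2) auto
  also have "\<dots> = ennreal (exp \<gamma> + exp (-s*\<gamma>) * card A * bound)"
    by (simp add: bound_def ennreal_mult' ennreal_of_nat_eq_real_of_nat mult_ac)
  finally have good: "(\<Sum>a\<in>A - B. measure G (E a)) \<le> exp \<gamma> + exp (-s*\<gamma>) * card A * bound"
    by (subst (asm) ennreal_le_iff) (auto simp: bound_def)
  have "(\<Sum>a\<in>A. measure G (E a)) = (\<Sum>a\<in>B. measure G (E a)) + (\<Sum>a\<in>A - B. measure G (E a))"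
    using fin by (subst sum.subset_diff[of B]) (auto simp: B_def)
  with bad good have "(\<Sum>a\<in>A. measure G (E a)) \<le> (\<Sum>a\<in>A. energy a) / (real n * T) + exp \<gamma>
      + exp (-s*\<gamma>) * card A * bound" by linarith
  then show ?thesis
    unfolding G_def[symmetric] bound_def[symmetric] energy_def[symmetric]
    by (simp add: G.emeasure_eq_measure sum_ennreal ennreal_leI)
qed

lemma le_of_linear_bound:
  fixes a b k :: real and N :: nat
  assumes "\<And>n. n \<ge> N \<Longrightarrow> real n * a \<le> real n * b + k"
  shows "a \<le> b"
proof (rule ccontr)
  assume "\<not> a \<le> b"
  then have ab: "0 < a - b" by simp
  define n where "n = max N (nat \<lceil>k/(a-b)\<rceil> + 1)"
  have "k/(a-b) < real n" unfolding n_def by linarith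
  then have "k < real n * (a-b)" using ab by (simp add: divide_less_eq mult.commute)
  moreover have "real n * a \<le> real n * b + k" using assms[of n] unfolding n_def by simp
  ultimately show False by (simp add: algebra_simps)
qed

lemma le_of_small_perturbations:
  fixes X C K :: real
  assumes "\<And>\<eta>. 0 < \<eta> \<Longrightarrow> \<eta> \<le> 1 \<Longrightarrow> X \<le> C + \<eta> * K" "0 \<le> K"
  shows "X \<le> C"
proof (rule ccontr)
  assume "\<not> X \<le> C"
  then have d: "0 < X - C" by simp
  define \<eta> where "\<eta> = min 1 ((X - C)/(2 * (K+1)))"
  have e: "0 < \<eta>" "\<eta> \<le> 1" unfolding \<eta>_def using d assms(2) by auto
  have "\<eta> * K \<le> (X - C)/(2 * (K+1)) * K" unfolding \<eta>_def using assms(2) by (intro mult_right_mono) auto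
  also have "\<dots> < X - C"
  proof -
    have "(X - C)/(2 * (K+1)) * K = (X - C) * (K / (2 * (K+1)))" by simp
    also have "\<dots> < (X - C) * 1" using d assms(2) by (intro mult_strict_left_mono) auto
    finally show ?thesis by simp
  qed
  finally show False using assms(1)[OF e] by simp
qed

lemma rate_le_exponent:
  fixes r P T s F :: real and N :: nat
  assumes P: "0 \<le> P" and T: "P < T" and s: "0 < s"
    and bound: "\<And>n. n \<ge> N \<Longrightarrow> \<exists>M. 2 powr (real n * r) \<le> M \<and>
      (\<forall>\<gamma>. (1 - (T - P) / (4 * T)) * M \<le> M * P / T + exp \<gamma> + M * exp (- s * \<gamma>) * exp (real n * F))"
  shows "r * ln 2 \<le> F / s"
proof -
  define \<delta> where "\<delta> = T - P"
  have \<delta>: "0 < \<delta>" "0 < T" unfolding \<delta>_def using P T by auto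
  define t where "t = ln (4 * T / \<delta>) / s"
  have exp_t: "exp (- s * t) = \<delta> / (4 * T)"
  proof -
    have "- s * t = ln (\<delta> / (4 * T))" unfolding t_def using s \<delta> by (simp add: ln_div)
    then show ?thesis using \<delta> by simp
  qed
  have "real n * (r * ln 2) \<le> real n * (F / s) + (t - ln (\<delta> / (2 * T)))" if n: "n \<ge> N" for n
  proof -
    obtain M where M: "2 powr (real n * r) \<le> M" and
      err: "\<And>\<gamma>. (1 - \<delta> / (4 * T)) * M \<le> M * P / T + exp \<gamma> + M * exp (- s * \<gamma>) * exp (real n * F)"
      using bound[OF n] unfolding \<delta>_def by blast
    have M_pos: "0 < M" using M by (rule less_le_trans[rotated]) simp
    define \<gamma> where "\<gamma> = real n * F / s + t"
    \<comment> \<open>this choice of \<open>\<gamma>\<close> balances the last term against a quarter of the gap \<open>\<delta>/T\<close>\<close>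
    have "- s * \<gamma> + real n * F = - s * t" using s by (simp add: \<gamma>_def field_simps)
    then have "exp (- s * \<gamma>) * exp (real n * F) = \<delta> / (4 * T)"
      by (simp only: exp_add[symmetric] exp_t)
    moreover have "(1 - \<delta> / (4 * T)) * M - M * P / T - M * (\<delta> / (4 * T)) = M * (\<delta> / (2 * T))"
      using \<delta> by (simp add: \<delta>_def field_simps)
    ultimately have "M * (\<delta> / (2 * T)) \<le> exp \<gamma>" using err[of \<gamma>] by (simp add: mult.assoc)
    then have "ln M + ln (\<delta> / (2 * T)) \<le> \<gamma>"
      using M_pos \<delta> by (simp add: ln_mult_pos[symmetric] ln_le_cancel_iff[symmetric] del: ln_le_cancel_iff)
    moreover have "real n * r * ln 2 \<le> ln M"
      using M M_pos by (subst (asm) ln_le_cancel_iff[symmetric]) (auto simp: ln_powr)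
    ultimately show ?thesis unfolding \<gamma>_def by (simp add: algebra_simps)
  qed
  then show ?thesis by (rule le_of_linear_bound)
qed

lemma lr_moment_at_output_variance:
  fixes \<sigma> P s :: real
  assumes \<sigma>: "0 < \<sigma>" and P: "0 \<le> P" and s: "0 \<le> s"
  defines "\<tau> \<equiv> sqrt (\<sigma>\<^sup>2 + P)" and "u \<equiv> P / (\<sigma>\<^sup>2 + P)"
  shows "lr_moment_const \<sigma> \<tau> s = s * ln (1 + P/\<sigma>\<^sup>2) / 2 - ln (1 + s * u) / 2"
    and "lr_moment_coeff \<sigma> \<tau> s = s * (1+s) / (2 * (\<sigma>\<^sup>2 + P) * (1 + s * u))"
proof -
  have \<tau>: "\<tau>\<^sup>2 = \<sigma>\<^sup>2 + P" "0 < \<tau>" unfolding \<tau>_def using \<sigma> P by (auto simp: add_pos_nonneg)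
  have "0 < \<sigma>\<^sup>2 + P" using \<sigma> P by (simp add: add_pos_nonneg)
  then have su: "0 \<le> s * u" unfolding u_def using P s by simp
  have precision: "tilted_precision \<sigma> \<tau> s = (1 + s * u) / \<sigma>\<^sup>2"
    unfolding tilted_precision_def \<tau> u_def using \<sigma> \<open>0 < \<sigma>\<^sup>2 + P\<close> by (simp add: field_simps)
  have "ln (1 + P/\<sigma>\<^sup>2) = ln (\<tau>\<^sup>2 / \<sigma>\<^sup>2)" unfolding \<tau> using \<sigma> by (simp add: field_simps)
  also have "\<dots> = 2 * ln \<tau> - 2 * ln \<sigma>" using \<tau>(2) \<sigma> by (simp add: ln_div ln_realpow)
  finally have "ln \<tau> = ln \<sigma> + ln (1 + P/\<sigma>\<^sup>2) / 2" by argo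
  then show "lr_moment_const \<sigma> \<tau> s = s * ln (1 + P/\<sigma>\<^sup>2) / 2 - ln (1 + s * u) / 2"
    unfolding lr_moment_const_def precision using su \<sigma> by (simp add: ln_div ln_realpow algebra_simps) argo
  show "lr_moment_coeff \<sigma> \<tau> s = s * (1+s) / (2 * (\<sigma>\<^sup>2 + P) * (1 + s * u))"
    unfolding lr_moment_coeff_def precision \<tau> using \<sigma> by simp
qed

lemma ln_one_plus_mult_ge:
  fixes s u :: real
  assumes "0 \<le> u" "u \<le> 1" "0 < s" "s \<le> 1"
  shows "s * u - s\<^sup>2 \<le> ln (1 + s * u)"
proof -
  have "s * u - s\<^sup>2 \<le> s * u - (s * u)\<^sup>2"
    using assms by (simp add: power_mult_distrib mult_left_le power_le_one)
  also have "\<dots> \<le> ln (1 + s * u)"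
    using assms by (intro ln_one_plus_pos_lower_bound) (auto simp: mult_le_one)
  finally show ?thesis .
qed

lemma lr_moment_exponent_le:
  fixes \<sigma> P s T :: real
  assumes \<sigma>: "0 < \<sigma>" and P: "0 \<le> P" and s: "0 < s" "s \<le> 1" and T: "0 \<le> T"
  defines "\<tau> \<equiv> sqrt (\<sigma>\<^sup>2 + P)"
  shows "(lr_moment_const \<sigma> \<tau> s + lr_moment_coeff \<sigma> \<tau> s * T) / s
    \<le> ln (1 + P/\<sigma>\<^sup>2) / 2 + s/2 + ((1+s) * T - P) / (2 * (\<sigma>\<^sup>2 + P))"
proof -
  define u where "u = P / (\<sigma>\<^sup>2 + P)"
  have \<sigma>P: "0 < \<sigma>\<^sup>2 + P" using \<sigma> P by (simp add: add_pos_nonneg)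
  have u: "0 \<le> u" "u \<le> 1" unfolding u_def using P \<sigma>P by auto
  note closed_form = lr_moment_at_output_variance[OF \<sigma> P less_imp_le[OF s(1)], folded \<tau>_def u_def]
  have "- ln (1 + s * u) / (2 * s) \<le> (s\<^sup>2 - s * u) / (2 * s)"
    using ln_one_plus_mult_ge[OF u s] s by (intro divide_right_mono) auto
  also have "\<dots> = s/2 - u/2" using s by (simp add: field_simps power2_eq_square)
  finally have const_le: "lr_moment_const \<sigma> \<tau> s / s \<le> ln (1 + P/\<sigma>\<^sup>2) / 2 + s/2 - u/2"
    unfolding closed_form using s by (simp add: diff_divide_distrib)
  have "lr_moment_coeff \<sigma> \<tau> s * T / s = (1+s) * T / (2 * (\<sigma>\<^sup>2 + P)) / (1 + s * u)"
    unfolding closed_form using s by simp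
  also have "\<dots> \<le> (1+s) * T / (2 * (\<sigma>\<^sup>2 + P)) / 1"
    using s u T \<sigma>P by (intro divide_left_mono) (auto intro!: divide_nonneg_pos mult_nonneg_nonneg add_pos_nonneg)
  finally have coeff_le: "lr_moment_coeff \<sigma> \<tau> s * T / s \<le> (1+s) * T / (2 * (\<sigma>\<^sup>2 + P))" by simp
  have "u / 2 = P / (2 * (\<sigma>\<^sup>2 + P))" unfolding u_def by simp
  with const_le coeff_le show ?thesis by (simp add: add_divide_distrib diff_divide_distrib)
qed

text \<open>The finite-blocklength converse for \<open>M\<close> messages over \<open>n\<close> uses of a Gaussian channel with
  noise variance \<open>\<sigma>\<^sup>2\<close> and received power \<open>P\<close> at average error probability \<open>\<epsilon>\<close>; \<open>T\<close> is an
  energy threshold and \<open>s\<close>, \<open>\<gamma>\<close> are tilting parameters.\<close>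

definition gaussian_converse_bound :: "real \<Rightarrow> real \<Rightarrow> real \<Rightarrow> nat \<Rightarrow> real \<Rightarrow> bool" where
  "gaussian_converse_bound \<sigma> P \<epsilon> n M \<longleftrightarrow> (\<forall>T s \<gamma>. P < T \<longrightarrow> 0 < s \<longrightarrow> s \<le> 1 \<longrightarrow>
     (1 - \<epsilon>) * M \<le> M * P / T + exp \<gamma> + M * exp (- s * \<gamma>) * exp (real n *
       (lr_moment_const \<sigma> (sqrt (\<sigma>\<^sup>2 + P)) s + lr_moment_coeff \<sigma> (sqrt (\<sigma>\<^sup>2 + P)) s * T)))"

lemma rate_le_capacity:
  fixes Wm R P \<sigma> :: real
  assumes Wm: "0 < Wm" and \<sigma>: "0 < \<sigma>" and P: "0 \<le> P"
    and codes: "\<And>\<epsilon>. 0 < \<epsilon> \<Longrightarrow> \<exists>N. \<forall>n\<ge>N. \<exists>M. 2 powr (real n * R / (2 * Wm)) \<le> M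
                                       \<and> gaussian_converse_bound \<sigma> P \<epsilon> n M"
  shows "R \<le> Cap Wm (P / \<sigma>\<^sup>2)"
proof -
  define \<tau> where "\<tau> = sqrt (\<sigma>\<^sup>2 + P)"
  define C where "C = ln (1 + P / \<sigma>\<^sup>2) / 2"
  have "0 < \<sigma>\<^sup>2 + P" using \<sigma> P by (simp add: add_pos_nonneg)
  have "R / (2 * Wm) * ln 2 \<le> C + \<eta> * (1/2 + (2 + P) / (2 * (\<sigma>\<^sup>2 + P)))"
    if \<eta>: "0 < \<eta>" "\<eta> \<le> 1" for \<eta>
  proof -
    define T where "T = P + \<eta>"
    have T: "P < T" using \<eta> by (simp add: T_def)
    obtain N where N: "\<forall>n\<ge>N. \<exists>M. 2 powr (real n * (R / (2 * Wm))) \<le> M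
        \<and> gaussian_converse_bound \<sigma> P ((T - P) / (4 * T)) n M"
      using codes[of "(T - P) / (4 * T)"] P T by auto
    have "R / (2 * Wm) * ln 2 \<le> (lr_moment_const \<sigma> \<tau> \<eta> + lr_moment_coeff \<sigma> \<tau> \<eta> * T) / \<eta>"
    proof (rule rate_le_exponent[OF P T \<eta>(1)])
      fix n assume "N \<le> n"
      with N obtain M where "2 powr (real n * (R / (2 * Wm))) \<le> M"
        and "gaussian_converse_bound \<sigma> P ((T - P) / (4 * T)) n M" by blast
      then show "\<exists>M. 2 powr (real n * (R / (2 * Wm))) \<le> M \<and> (\<forall>\<gamma>. (1 - (T - P) / (4 * T)) * M \<le> M * P / T
          + exp \<gamma> + M * exp (- \<eta> * \<gamma>) * exp (real n * (lr_moment_const \<sigma> \<tau> \<eta> + lr_moment_coeff \<sigma> \<tau> \<eta> * T)))"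
        using T \<eta> unfolding gaussian_converse_bound_def \<tau>_def by blast
    qed
    also have "\<dots> \<le> C + \<eta>/2 + ((1+\<eta>) * (P + \<eta>) - P) / (2 * (\<sigma>\<^sup>2 + P))"
      unfolding C_def \<tau>_def T_def using \<sigma> P \<eta> by (intro lr_moment_exponent_le) auto
    also have "((1+\<eta>) * (P + \<eta>) - P) = \<eta> * (1 + P + \<eta>)" by (simp add: algebra_simps)
    also have "\<eta> * (1 + P + \<eta>) / (2 * (\<sigma>\<^sup>2 + P)) \<le> \<eta> * (2 + P) / (2 * (\<sigma>\<^sup>2 + P))"
      using \<eta> \<open>0 < \<sigma>\<^sup>2 + P\<close> by (intro divide_right_mono mult_left_mono) auto
    finally show ?thesis by (simp add: algebra_simps add_divide_distrib)
  qed
  then have "R / (2 * Wm) * ln 2 \<le> C"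
    by (rule le_of_small_perturbations) (use P \<open>0 < \<sigma>\<^sup>2 + P\<close> in auto)
  then show ?thesis
    using Wm unfolding C_def Cap_def log_def by (simp add: field_simps)
qed

lemma sum_emeasure_pair_le_sections:
  fixes A :: "'a measure" and D :: "'b measure" and S :: "'i \<Rightarrow> ('a \<times> 'b) set" and K :: "'b \<Rightarrow> ennreal"
  assumes A: "prob_space A" and D: "prob_space D" and fin: "finite I"
    and S: "\<And>i. i \<in> I \<Longrightarrow> S i \<in> sets (A \<Otimes>\<^sub>M D)" and K: "K \<in> borel_measurable D"
    and b: "\<And>d. d \<in> space D \<Longrightarrow> (\<Sum>i\<in>I. emeasure A ((\<lambda>z. (z, d)) -` S i)) \<le> K d"
  shows "(\<Sum>i\<in>I. emeasure (A \<Otimes>\<^sub>M D) (S i)) \<le> (\<integral>\<^sup>+d. K d \<partial>D)"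
proof -
  interpret A: prob_space A by fact
  interpret D: prob_space D by fact
  interpret AD: pair_sigma_finite A D by standard
  have "(\<Sum>i\<in>I. emeasure (A \<Otimes>\<^sub>M D) (S i)) = (\<Sum>i\<in>I. \<integral>\<^sup>+d. emeasure A ((\<lambda>z. (z, d)) -` S i) \<partial>D)"
    using S by (intro sum.cong refl AD.emeasure_pair_measure_alt2) auto
  also have "\<dots> = (\<integral>\<^sup>+d. (\<Sum>i\<in>I. emeasure A ((\<lambda>z. (z, d)) -` S i)) \<partial>D)"
    using S by (intro nn_integral_sum[symmetric] AD.measurable_emeasure_Pair2) auto
  also have "\<dots> \<le> (\<integral>\<^sup>+d. K d \<partial>D)"
    using b by (intro nn_integral_mono) auto
  finally show ?thesis .
qed

lemma sum_emeasure_pair_pair_le_middle_sections: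
  fixes A :: "'a measure" and B :: "'b measure" and C :: "'c measure" and S :: "'i \<Rightarrow> ('a \<times> 'b \<times> 'c) set"
  assumes A: "prob_space A" and B: "prob_space B" and C: "prob_space C" and fin: "finite I"
    and S: "\<And>i. i \<in> I \<Longrightarrow> S i \<in> sets (A \<Otimes>\<^sub>M (B \<Otimes>\<^sub>M C))"
    and b: "\<And>z1 z3. z1 \<in> space A \<Longrightarrow> z3 \<in> space C \<Longrightarrow>
       (\<Sum>i\<in>I. emeasure B ((\<lambda>z2. (z2, z3)) -` (Pair z1 -` S i))) \<le> ennreal K"
  shows "(\<Sum>i\<in>I. emeasure (A \<Otimes>\<^sub>M (B \<Otimes>\<^sub>M C)) (S i)) \<le> ennreal K"
proof -
  interpret A: prob_space A by fact
  interpret B: prob_space B by fact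
  interpret C: prob_space C by fact
  interpret BC: pair_prob_space B C by standard
  interpret ABC: pair_sigma_finite A "B \<Otimes>\<^sub>M C" by standard
  have "(\<Sum>i\<in>I. emeasure (A \<Otimes>\<^sub>M (B \<Otimes>\<^sub>M C)) (S i)) = (\<Sum>i\<in>I. \<integral>\<^sup>+z1. emeasure (B \<Otimes>\<^sub>M C) (Pair z1 -` S i) \<partial>A)"
  proof -
    have sf: "sigma_finite_measure (B \<Otimes>\<^sub>M C)"
      by (intro prob_space_imp_sigma_finite BC.P.prob_space_axioms)
    show ?thesis using S by (intro sum.cong refl sigma_finite_measure.emeasure_pair_measure_alt[OF sf]) auto
  qed
  also have "\<dots> = (\<integral>\<^sup>+z1. (\<Sum>i\<in>I. emeasure (B \<Otimes>\<^sub>M C) (Pair z1 -` S i)) \<partial>A)"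
    using S by (intro nn_integral_sum[symmetric] ABC.measurable_emeasure_Pair1) auto
  also have "\<dots> \<le> (\<integral>\<^sup>+z1. ennreal K \<partial>A)"
  proof (intro nn_integral_mono)
    fix z1 assume z1: "z1 \<in> space A"
    have "(\<Sum>i\<in>I. emeasure (B \<Otimes>\<^sub>M C) (Pair z1 -` S i)) \<le> (\<integral>\<^sup>+z3. ennreal K \<partial>C)"
      using S b z1 by (intro sum_emeasure_pair_le_sections B C fin) auto
    also have "\<dots> = ennreal K" by (simp add: C.emeasure_space_1)
    finally show "(\<Sum>i\<in>I. emeasure (B \<Otimes>\<^sub>M C) (Pair z1 -` S i)) \<le> ennreal K" .
  qed
  also have "\<dots> = ennreal K" by (simp add: A.emeasure_space_1)
  finally show ?thesis .
qed

lemma nn_integral_pair_snd: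
  fixes A :: "'a measure" and D :: "'b measure"
  assumes A: "prob_space A" and D: "prob_space D" and h: "h \<in> borel_measurable D"
  shows "(\<integral>\<^sup>+\<omega>. h (snd \<omega>) \<partial>(A \<Otimes>\<^sub>M D)) = (\<integral>\<^sup>+d. h d \<partial>D)"
proof -
  interpret A: prob_space A by fact
  interpret D: prob_space D by fact
  interpret AD: pair_sigma_finite A D by standard
  have "(\<integral>\<^sup>+\<omega>. h (snd \<omega>) \<partial>(A \<Otimes>\<^sub>M D)) = (\<integral>\<^sup>+y. (\<integral>\<^sup>+x. h (snd (x, y)) \<partial>A) \<partial>D)"
    using h by (intro AD.nn_integral_snd[symmetric]) (rule measurable_compose[OF measurable_snd h])
  also have "\<dots> = (\<integral>\<^sup>+d. h d \<partial>D)" by (simp add: A.emeasure_space_1)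
  finally show ?thesis .
qed

lemma sigY2_eq:
  assumes "\<And>i. i < n \<Longrightarrow> g2 * sigX2 n f2 a i + z i = g2 * sigX2 n f2 a' i + z' i"
  shows "sigY2 n g2 f2 a z = sigY2 n g2 f2 a' z'"
  using assms unfolding sigY2_def trunc_def by (auto simp: fun_eq_iff)

lemma sigY1_eq:
  assumes "\<And>i. i < n \<Longrightarrow> (g1 * sigX1 n g2 enc1 f2 a s2 z2 i + g21m * sigX2 n f2 s2 i) + z i
                        = (g1 * sigX1 n g2 enc1 f2 a' s2 z2 i + g21m * sigX2 n f2 s2 i) + z' i"
  shows "sigY1 n g1 g21m g2 enc1 f2 a s2 z z2 = sigY1 n g1 g21m g2 enc1 f2 a' s2 z' z2"
  using assms unfolding sigY1_def trunc_def by (auto simp: fun_eq_iff)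

locale fd_code =
  fixes \<sigma> g1 g21m g2 g21s :: real and n m :: nat
    and enc1 :: "nat \<Rightarrow> (nat \<Rightarrow> real) \<Rightarrow> nat \<Rightarrow> real" and f2 f3 :: "nat \<Rightarrow> nat \<Rightarrow> real"
    and dec2 :: "(nat \<Rightarrow> real) \<Rightarrow> (nat \<Rightarrow> real) \<Rightarrow> nat" and decBS :: "nat \<Rightarrow> (nat \<Rightarrow> real) \<Rightarrow> nat"
  assumes \<sigma>_pos: "0 < \<sigma>"
begin

abbreviation Z :: "(nat \<Rightarrow> real) measure" where "Z \<equiv> PiM {..<n} (\<lambda>_. gauss \<sigma>)"

abbreviation Zs :: "(nat \<Rightarrow> real) measure" where "Zs \<equiv> PiM {..<m} (\<lambda>_. gauss \<sigma>)"

definition success :: "nat \<Rightarrow> nat \<Rightarrow> ((nat \<Rightarrow> real) \<times> (nat \<Rightarrow> real) \<times> (nat \<Rightarrow> real)) set" where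
  "success s1 s2 = space (noise \<sigma> n m) - err_event n m g1 g21m g2 g21s enc1 f2 f3 dec2 decBS s1 s2"

lemma noise_eq: "noise \<sigma> n m = Z \<Otimes>\<^sub>M (Z \<Otimes>\<^sub>M Zs)"
  unfolding noise_def ..

lemma prob_space_Z: "prob_space Z" and prob_space_Zs: "prob_space Zs"
  using \<sigma>_pos by (auto intro: prob_space_PiM_gauss)

lemma prob_space_noise: "prob_space (noise \<sigma> n m)"
proof -
  interpret Z: prob_space Z by (rule prob_space_Z)
  interpret Zs: prob_space Zs by (rule prob_space_Zs)
  interpret ZZs: pair_prob_space Z Zs by standard
  interpret pair_prob_space Z "Z \<Otimes>\<^sub>M Zs" by standard
  show ?thesis unfolding noise_eq by (rule P.prob_space_axioms)
qed

lemma success_iff: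
  "(z1, z2, z3) \<in> success s1 s2 \<longleftrightarrow> (z1, z2, z3) \<in> space (noise \<sigma> n m)
     \<and> dec2 (sigY1 n g1 g21m g2 enc1 f2 s1 s2 z1 z2) (sigY3 m g21s f3 s2 z3) = s1
     \<and> decBS s1 (sigY2 n g2 f2 s2 z2) = s2"
  by (auto simp: success_def err_event_def Let_def)

text \<open>Uplink: given \<open>S\<^sub>1\<close>, \<open>Z\<^sub>1\<close> and \<open>Z\<^sub>3\<close>, the base station sees a point-to-point Gaussian
  channel with codewords \<open>\<gamma>\<^sub>2 X\<^sub>2(S\<^sub>2)\<close>.\<close>

lemma uplink_success_le:
  assumes \<tau>: "\<sigma> \<le> \<tau>" and s: "0 < s" and T: "0 < T" and n: "0 < n"
    and S: "\<And>s2. s2 < M2 \<Longrightarrow> success s1 s2 \<in> sets (noise \<sigma> n m)"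
  shows "(\<Sum>s2<M2. emeasure (noise \<sigma> n m) (success s1 s2))
    \<le> ennreal (g2\<^sup>2 * (\<Sum>s2<M2. \<Sum>i<n. (sigX2 n f2 s2 i)\<^sup>2) / (real n * T) + exp \<gamma>
        + exp (-s*\<gamma>) * M2 * exp (real n * (lr_moment_const \<sigma> \<tau> s + lr_moment_coeff \<sigma> \<tau> s * T)))"
  unfolding noise_eq
proof (rule sum_emeasure_pair_pair_le_middle_sections[OF prob_space_Z prob_space_Z prob_space_Zs])
  show "\<And>s2. s2 \<in> {..<M2} \<Longrightarrow> success s1 s2 \<in> sets (Z \<Otimes>\<^sub>M (Z \<Otimes>\<^sub>M Zs))"
    using S unfolding noise_eq by auto
  fix z1 z3
  define E where "E s2 = (\<lambda>z2. (z2, z3)) -` (Pair z1 -` success s1 s2)" for s2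
  have "(\<Sum>s2\<in>{..<M2}. emeasure Z (E s2))
    \<le> ennreal ((\<Sum>s2\<in>{..<M2}. \<Sum>i<n. (g2 * sigX2 n f2 s2 i - 0)\<^sup>2) / (real n * T) + exp \<gamma>
        + exp (-s*\<gamma>) * card {..<M2} * exp (real n * (lr_moment_const \<sigma> \<tau> s + lr_moment_coeff \<sigma> \<tau> s * T)))"
  proof (rule sum_emeasure_decoding_sets_le_energy[OF \<sigma>_pos \<tau> s _ n T])
    show "E s2 \<in> sets Z" if "s2 \<in> {..<M2}" for s2
      unfolding E_def using S[of s2] that by (auto simp: noise_eq intro!: sets_Pair2 sets_Pair1)
    fix a a' z z' assume "a \<in> {..<M2}" "a' \<in> {..<M2}" "z \<in> E a" "z' \<in> E a'"
      and "\<And>i. i < n \<Longrightarrow> g2 * sigX2 n f2 a i + z i = g2 * sigX2 n f2 a' i + z' i"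
    then show "a = a'" using sigY2_eq[of n g2 f2 a z a' z'] by (auto simp: E_def success_iff)
  qed simp
  then show "(\<Sum>s2\<in>{..<M2}. emeasure Z ((\<lambda>z2. (z2, z3)) -` (Pair z1 -` success s1 s2)))
    \<le> ennreal (g2\<^sup>2 * (\<Sum>s2<M2. \<Sum>i<n. (sigX2 n f2 s2 i)\<^sup>2) / (real n * T) + exp \<gamma>
        + exp (-s*\<gamma>) * M2 * exp (real n * (lr_moment_const \<sigma> \<tau> s + lr_moment_coeff \<sigma> \<tau> s * T)))"
    unfolding E_def by (simp add: power_mult_distrib sum_distrib_left)
qed simp

text \<open>Downlink: given \<open>S\<^sub>2\<close>, \<open>Z\<^sub>2\<close> and \<open>Z\<^sub>3\<close>, the mobile M2 sees a point-to-point Gaussian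
  channel; the base station's symbols depend on \<open>Z\<^sub>2\<close>, so their energy is only bounded on
  average.\<close>

lemma downlink_section_le:
  assumes \<tau>: "\<sigma> \<le> \<tau>" and s: "0 < s" and T: "0 < T" and n: "0 < n"
    and S: "\<And>s1. s1 < M1 \<Longrightarrow> success s1 s2 \<in> sets (noise \<sigma> n m)"
  shows "(\<Sum>s1<M1. emeasure Z ((\<lambda>z1. (z1, z2, z3)) -` success s1 s2))
    \<le> ennreal (g1\<^sup>2 / (real n * T) * (\<Sum>s1<M1. \<Sum>i<n. (sigX1 n g2 enc1 f2 s1 s2 z2 i)\<^sup>2)
      + exp \<gamma> + exp (-s*\<gamma>) * M1 * exp (real n * (lr_moment_const \<sigma> \<tau> s + lr_moment_coeff \<sigma> \<tau> s * T)))"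
proof -
  define X where "X s1 i = g1 * sigX1 n g2 enc1 f2 s1 s2 z2 i + g21m * sigX2 n f2 s2 i" for s1 i
  define E where "E s1 = (\<lambda>z1. (z1, z2, z3)) -` success s1 s2" for s1
  have "(\<Sum>s1\<in>{..<M1}. emeasure Z (E s1))
    \<le> ennreal ((\<Sum>s1\<in>{..<M1}. \<Sum>i<n. (X s1 i - g21m * sigX2 n f2 s2 i)\<^sup>2) / (real n * T) + exp \<gamma>
        + exp (-s*\<gamma>) * card {..<M1} * exp (real n * (lr_moment_const \<sigma> \<tau> s + lr_moment_coeff \<sigma> \<tau> s * T)))"
  proof (rule sum_emeasure_decoding_sets_le_energy[OF \<sigma>_pos \<tau> s _ n T])
    show "E s1 \<in> sets Z" if "s1 \<in> {..<M1}" for s1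
      unfolding E_def using S[of s1] that by (auto simp: noise_eq intro!: sets_Pair2)
    fix a a' z z' assume "a \<in> {..<M1}" "a' \<in> {..<M1}" "z \<in> E a" "z' \<in> E a'"
      and "\<And>i. i < n \<Longrightarrow> X a i + z i = X a' i + z' i"
    moreover from this have "sigY1 n g1 g21m g2 enc1 f2 a s2 z z2 = sigY1 n g1 g21m g2 enc1 f2 a' s2 z' z2"
      by (intro sigY1_eq) (simp add: X_def)
    ultimately show "a = a'" by (auto simp: E_def success_iff)
  qed simp
  then show ?thesis
    unfolding E_def X_def by (simp add: power_mult_distrib sum_divide_distrib sum_distrib_left)
qed

lemma downlink_success_le:
  assumes \<tau>: "\<sigma> \<le> \<tau>" and s: "0 < s" and T: "0 < T" and n: "0 < n"
    and S: "\<And>s1. s1 < M1 \<Longrightarrow> success s1 s2 \<in> sets (noise \<sigma> n m)"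
    and X1: "\<And>s1 i. s1 < M1 \<Longrightarrow> i < n \<Longrightarrow>
      (\<lambda>(z1, z2, z3). sigX1 n g2 enc1 f2 s1 s2 z2 i) \<in> borel_measurable (noise \<sigma> n m)"
  shows "(\<Sum>s1<M1. emeasure (noise \<sigma> n m) (success s1 s2))
    \<le> ennreal (g1\<^sup>2 / (real n * T)) * (\<Sum>s1<M1. \<Sum>i<n.
          \<integral>\<^sup>+(z1, z2, z3). ennreal ((sigX1 n g2 enc1 f2 s1 s2 z2 i)\<^sup>2) \<partial>noise \<sigma> n m)
      + ennreal (exp \<gamma> + exp (-s*\<gamma>) * M1 * exp (real n * (lr_moment_const \<sigma> \<tau> s + lr_moment_coeff \<sigma> \<tau> s * T)))"
proof -
  define D where "D = Z \<Otimes>\<^sub>M Zs"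
  define c where "c = g1\<^sup>2 / (real n * T)"
  define C0 where "C0 = exp \<gamma> + exp (-s*\<gamma>) * M1 * exp (real n * (lr_moment_const \<sigma> \<tau> s + lr_moment_coeff \<sigma> \<tau> s * T))"
  define X where "X s1 i d = ennreal ((sigX1 n g2 enc1 f2 s1 s2 (fst d) i)\<^sup>2)"
    for s1 i and d :: "(nat \<Rightarrow> real) \<times> (nat \<Rightarrow> real)"
  interpret Z: prob_space Z by (rule prob_space_Z)
  interpret Zs: prob_space Zs by (rule prob_space_Zs)
  interpret ZZs: pair_prob_space Z Zs by standard
  have D: "prob_space D" unfolding D_def by (rule ZZs.P.prob_space_axioms)
  have noise: "noise \<sigma> n m = Z \<Otimes>\<^sub>M D" unfolding noise_eq D_def ..
  obtain z0 where z0: "z0 \<in> space Z" using Z.not_empty by (metis all_not_in_conv)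
  have X_meas: "X s1 i \<in> borel_measurable D" if "s1 < M1" "i < n" for s1 i
    using measurable_Pair2[OF X1[OF that, unfolded noise] z0] unfolding X_def by (simp add: split_beta)
  have cC0: "0 \<le> c" "0 \<le> C0" using T by (auto simp: c_def C0_def)
  have "(\<Sum>s1<M1. emeasure (Z \<Otimes>\<^sub>M D) (success s1 s2))
      \<le> (\<integral>\<^sup>+d. ennreal c * (\<Sum>s1<M1. \<Sum>i<n. X s1 i d) + ennreal C0 \<partial>D)"
  proof (rule sum_emeasure_pair_le_sections[OF prob_space_Z D])
    show "\<And>s1. s1 \<in> {..<M1} \<Longrightarrow> success s1 s2 \<in> sets (Z \<Otimes>\<^sub>M D)" using S unfolding noise by auto
    show "(\<lambda>d. ennreal c * (\<Sum>s1<M1. \<Sum>i<n. X s1 i d) + ennreal C0) \<in> borel_measurable D"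
      using X_meas by measurable
    fix d :: "(nat \<Rightarrow> real) \<times> (nat \<Rightarrow> real)"
    show "(\<Sum>s1\<in>{..<M1}. emeasure Z ((\<lambda>z. (z, d)) -` success s1 s2))
      \<le> ennreal c * (\<Sum>s1<M1. \<Sum>i<n. X s1 i d) + ennreal C0"
    proof -
      have "(\<Sum>s1\<in>{..<M1}. emeasure Z ((\<lambda>z. (z, d)) -` success s1 s2))
        \<le> ennreal (c * (\<Sum>s1<M1. \<Sum>i<n. (sigX1 n g2 enc1 f2 s1 s2 (fst d) i)\<^sup>2) + C0)"
        using downlink_section_le[OF \<tau> s T n S, of M1 "fst d" "snd d" \<gamma>]
        unfolding c_def C0_def by (simp add: add.assoc)
      also have "\<dots> = ennreal c * (\<Sum>s1<M1. \<Sum>i<n. X s1 i d) + ennreal C0"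
        using cC0 by (simp add: X_def ennreal_plus ennreal_mult sum_nonneg sum_ennreal)
      finally show ?thesis by simp
    qed
  qed simp
  also have "\<dots> = ennreal c * (\<Sum>s1<M1. \<Sum>i<n. \<integral>\<^sup>+d. X s1 i d \<partial>D) + ennreal C0"
  proof -
    have "(\<integral>\<^sup>+d. (\<Sum>s1<M1. \<Sum>i<n. X s1 i d) \<partial>D) = (\<Sum>s1<M1. \<integral>\<^sup>+d. (\<Sum>i<n. X s1 i d) \<partial>D)"
      using X_meas by (intro nn_integral_sum borel_measurable_sum) auto
    also have "\<dots> = (\<Sum>s1<M1. \<Sum>i<n. \<integral>\<^sup>+d. X s1 i d \<partial>D)"
      using X_meas by (intro sum.cong refl nn_integral_sum) auto
    finally show ?thesis
      using X_meas prob_space.emeasure_space_1[OF D]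
      by (subst nn_integral_add) (auto intro!: borel_measurable_sum simp: nn_integral_cmult)
  qed
  also have "(\<Sum>s1<M1. \<Sum>i<n. \<integral>\<^sup>+d. X s1 i d \<partial>D)
      = (\<Sum>s1<M1. \<Sum>i<n. \<integral>\<^sup>+(z1, z2, z3). ennreal ((sigX1 n g2 enc1 f2 s1 s2 z2 i)\<^sup>2) \<partial>noise \<sigma> n m)"
  proof (intro sum.cong refl)
    fix s1 i assume "s1 \<in> {..<M1}" "i \<in> {..<n}"
    then have "(\<integral>\<^sup>+d. X s1 i d \<partial>D) = (\<integral>\<^sup>+\<omega>. X s1 i (snd \<omega>) \<partial>Z \<Otimes>\<^sub>M D)"
      using X_meas by (intro nn_integral_pair_snd[OF prob_space_Z D, symmetric]) auto
    then show "(\<integral>\<^sup>+d. X s1 i d \<partial>D)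
      = (\<integral>\<^sup>+(z1, z2, z3). ennreal ((sigX1 n g2 enc1 f2 s1 s2 z2 i)\<^sup>2) \<partial>noise \<sigma> n m)"
      unfolding noise X_def by (simp add: split_beta')
  qed
  finally show ?thesis unfolding noise c_def C0_def .
qed

lemma success_eq_compl:
  "success s1 s2 = space (noise \<sigma> n m)
      - err_event n m g1 g21m g2 g21s enc1 f2 f3 dec2 decBS s1 s2 \<inter> space (noise \<sigma> n m)"
  by (auto simp: success_def)

lemma success_in_sets:
  "err_event n m g1 g21m g2 g21s enc1 f2 f3 dec2 decBS s1 s2 \<inter> space (noise \<sigma> n m) \<in> sets (noise \<sigma> n m)
    \<Longrightarrow> success s1 s2 \<in> sets (noise \<sigma> n m)"
  unfolding success_eq_compl by (rule sets.compl_sets)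

lemma sum_measure_success_ge:
  assumes "\<And>s1 s2. s1 < M1 \<Longrightarrow> s2 < M2 \<Longrightarrow>
      err_event n m g1 g21m g2 g21s enc1 f2 f3 dec2 decBS s1 s2 \<inter> space (noise \<sigma> n m) \<in> sets (noise \<sigma> n m)"
    and "(\<Sum>s1<M1. \<Sum>s2<M2. measure (noise \<sigma> n m)
      (err_event n m g1 g21m g2 g21s enc1 f2 f3 dec2 decBS s1 s2 \<inter> space (noise \<sigma> n m))) \<le> \<epsilon> * M1 * M2"
  shows "(1 - \<epsilon>) * M1 * M2 \<le> (\<Sum>s1<M1. \<Sum>s2<M2. measure (noise \<sigma> n m) (success s1 s2))"
proof -
  interpret prob_space "noise \<sigma> n m" by (rule prob_space_noise)
  have "(\<Sum>s1<M1. \<Sum>s2<M2. measure (noise \<sigma> n m) (success s1 s2))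
      = (\<Sum>s1<M1. \<Sum>s2<M2. 1 - measure (noise \<sigma> n m)
          (err_event n m g1 g21m g2 g21s enc1 f2 f3 dec2 decBS s1 s2 \<inter> space (noise \<sigma> n m)))"
    using assms(1) by (intro sum.cong refl) (simp add: success_eq_compl prob_compl)
  with assms(2) show ?thesis by (simp add: sum_subtractf algebra_simps)
qed

end

lemma is_code_uplink_converse:
  assumes \<sigma>: "0 < \<sigma>" and P2: "0 \<le> P2" and code: "is_code Wm Ws g1 g21m g2 g21s \<sigma> P1 P2 n M1 M2 \<epsilon>"
  shows "gaussian_converse_bound \<sigma> (g2\<^sup>2 * P2) \<epsilon> n (real M2)"
  unfolding gaussian_converse_bound_def
proof (intro allI impI)
  fix T s \<gamma> :: real assume T: "g2\<^sup>2 * P2 < T" and s: "0 < s" "s \<le> 1"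
  define m where "m = side_len Wm Ws n"
  define \<tau> where "\<tau> = sqrt (\<sigma>\<^sup>2 + g2\<^sup>2 * P2)"
  define bound where "bound = exp \<gamma> + exp (- s * \<gamma>) * M2 * exp (real n * (lr_moment_const \<sigma> \<tau> s + lr_moment_coeff \<sigma> \<tau> s * T))"
  have T_pos: "0 < T" using T P2 by (smt (verit) zero_le_power2 mult_nonneg_nonneg)
  have \<tau>: "\<sigma> \<le> \<tau>" unfolding \<tau>_def using \<sigma> P2 by (intro real_le_rsqrt) auto
  from code obtain enc1 f2 f3 dec2 decBS where n: "0 < n" and M1: "0 < M1" and
    err_sets: "\<forall>s1<M1. \<forall>s2<M2. err_event n m g1 g21m g2 g21s enc1 f2 f3 dec2 decBS s1 s2
        \<inter> space (noise \<sigma> n m) \<in> sets (noise \<sigma> n m)" and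
    power: "(\<Sum>s2<M2. (\<Sum>i<n. (sigX2 n f2 s2 i)\<^sup>2) + (\<Sum>j<m. (sigX3 m f3 s2 j)\<^sup>2)) \<le> real M2 * real n * P2" and
    err: "(\<Sum>s1<M1. \<Sum>s2<M2. measure (noise \<sigma> n m) (err_event n m g1 g21m g2 g21s enc1 f2 f3 dec2 decBS s1 s2
        \<inter> space (noise \<sigma> n m))) \<le> \<epsilon> * real M1 * real M2"
    unfolding is_code_def Let_def m_def by blast
  interpret fd_code \<sigma> g1 g21m g2 g21s n m enc1 f2 f3 dec2 decBS by unfold_locales (rule \<sigma>)
  interpret prob_space "noise \<sigma> n m" by (rule prob_space_noise)
  have "g2\<^sup>2 * (\<Sum>s2<M2. \<Sum>i<n. (sigX2 n f2 s2 i)\<^sup>2) \<le> g2\<^sup>2 * (real M2 * real n * P2)"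
    using power by (intro mult_left_mono order.trans[OF sum_mono power]) (auto intro: sum_nonneg)
  then have energy: "g2\<^sup>2 * (\<Sum>s2<M2. \<Sum>i<n. (sigX2 n f2 s2 i)\<^sup>2) / (real n * T) \<le> M2 * (g2\<^sup>2 * P2) / T"
    using n T_pos by (simp add: divide_simps mult_ac)
  have "(\<Sum>s2<M2. measure (noise \<sigma> n m) (success s1 s2))
      \<le> g2\<^sup>2 * (\<Sum>s2<M2. \<Sum>i<n. (sigX2 n f2 s2 i)\<^sup>2) / (real n * T) + bound" if "s1 < M1" for s1
  proof -
    have "ennreal (\<Sum>s2<M2. measure (noise \<sigma> n m) (success s1 s2))
        = (\<Sum>s2<M2. emeasure (noise \<sigma> n m) (success s1 s2))"
      by (simp add: emeasure_eq_measure sum_ennreal)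
    also have "\<dots> \<le> ennreal (g2\<^sup>2 * (\<Sum>s2<M2. \<Sum>i<n. (sigX2 n f2 s2 i)\<^sup>2) / (real n * T) + exp \<gamma>
        + exp (- s * \<gamma>) * M2 * exp (real n * (lr_moment_const \<sigma> \<tau> s + lr_moment_coeff \<sigma> \<tau> s * T)))"
      using err_sets that by (intro uplink_success_le[OF \<tau> s(1) T_pos n] success_in_sets) auto
    finally show ?thesis
      using T_pos by (subst (asm) ennreal_le_iff) (auto simp: bound_def add.assoc intro!: add_nonneg_nonneg sum_nonneg divide_nonneg_nonneg mult_nonneg_nonneg)
  qed
  then have "(1 - \<epsilon>) * M1 * M2 \<le> (\<Sum>s1<M1. g2\<^sup>2 * (\<Sum>s2<M2. \<Sum>i<n. (sigX2 n f2 s2 i)\<^sup>2) / (real n * T) + bound)"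
    using sum_measure_success_ge[of M1 M2 \<epsilon>] err_sets err
    by (smt (verit) lessThan_iff sum_mono)
  also have "\<dots> \<le> M1 * (M2 * (g2\<^sup>2 * P2) / T + bound)"
    using energy by (simp add: mult_left_mono)
  finally have "real M1 * ((1 - \<epsilon>) * M2) \<le> real M1 * (M2 * (g2\<^sup>2 * P2) / T + bound)"
    by (simp add: algebra_simps)
  then have "(1 - \<epsilon>) * M2 \<le> M2 * (g2\<^sup>2 * P2) / T + bound" using M1 by simp
  then show "(1 - \<epsilon>) * real M2 \<le> real M2 * (g2\<^sup>2 * P2) / T + exp \<gamma> + real M2 * exp (- s * \<gamma>) *
      exp (real n * (lr_moment_const \<sigma> (sqrt (\<sigma>\<^sup>2 + g2\<^sup>2 * P2)) s + lr_moment_coeff \<sigma> (sqrt (\<sigma>\<^sup>2 + g2\<^sup>2 * P2)) s * T))"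
    unfolding bound_def \<tau>_def by (simp add: algebra_simps)
qed

lemma is_code_downlink_converse:
  assumes \<sigma>: "0 < \<sigma>" and P1: "0 \<le> P1" and code: "is_code Wm Ws g1 g21m g2 g21s \<sigma> P1 P2 n M1 M2 \<epsilon>"
  shows "gaussian_converse_bound \<sigma> (g1\<^sup>2 * P1) \<epsilon> n (real M1)"
  unfolding gaussian_converse_bound_def
proof (intro allI impI)
  fix T s \<gamma> :: real assume T: "g1\<^sup>2 * P1 < T" and s: "0 < s" "s \<le> 1"
  define m where "m = side_len Wm Ws n"
  define \<tau> where "\<tau> = sqrt (\<sigma>\<^sup>2 + g1\<^sup>2 * P1)"
  define bound where "bound = exp \<gamma> + exp (- s * \<gamma>) * M1 * exp (real n * (lr_moment_const \<sigma> \<tau> s + lr_moment_coeff \<sigma> \<tau> s * T))"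
  have T_pos: "0 < T" using T P1 by (smt (verit) zero_le_power2 mult_nonneg_nonneg)
  have \<tau>: "\<sigma> \<le> \<tau>" unfolding \<tau>_def using \<sigma> P1 by (intro real_le_rsqrt) auto
  from code obtain enc1 f2 f3 dec2 decBS where n: "0 < n" and M2: "0 < M2" and
    X1: "\<forall>s1<M1. \<forall>s2<M2. \<forall>i<n.
      (\<lambda>(z1, z2, z3). sigX1 n g2 enc1 f2 s1 s2 z2 i) \<in> borel_measurable (noise \<sigma> n m)" and
    err_sets: "\<forall>s1<M1. \<forall>s2<M2. err_event n m g1 g21m g2 g21s enc1 f2 f3 dec2 decBS s1 s2
        \<inter> space (noise \<sigma> n m) \<in> sets (noise \<sigma> n m)" and
    power: "(\<Sum>s1<M1. \<Sum>s2<M2. \<Sum>i<n.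
      (\<integral>\<^sup>+ (z1, z2, z3). ennreal ((sigX1 n g2 enc1 f2 s1 s2 z2 i)\<^sup>2) \<partial>noise \<sigma> n m))
        \<le> ennreal (real M1 * real M2 * real n * P1)" and
    err: "(\<Sum>s1<M1. \<Sum>s2<M2. measure (noise \<sigma> n m) (err_event n m g1 g21m g2 g21s enc1 f2 f3 dec2 decBS s1 s2
        \<inter> space (noise \<sigma> n m))) \<le> \<epsilon> * real M1 * real M2"
    unfolding is_code_def Let_def m_def by blast
  interpret fd_code \<sigma> g1 g21m g2 g21s n m enc1 f2 f3 dec2 decBS by unfold_locales (rule \<sigma>)
  interpret prob_space "noise \<sigma> n m" by (rule prob_space_noise)
  have "ennreal (\<Sum>s1<M1. \<Sum>s2<M2. measure (noise \<sigma> n m) (success s1 s2))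
      = (\<Sum>s2<M2. \<Sum>s1<M1. emeasure (noise \<sigma> n m) (success s1 s2))"
    by (subst sum.swap) (simp add: emeasure_eq_measure sum_ennreal sum_nonneg)
  also have "\<dots> \<le> (\<Sum>s2<M2. ennreal (g1\<^sup>2 / (real n * T)) * (\<Sum>s1<M1. \<Sum>i<n.
          \<integral>\<^sup>+(z1, z2, z3). ennreal ((sigX1 n g2 enc1 f2 s1 s2 z2 i)\<^sup>2) \<partial>noise \<sigma> n m) + ennreal bound)"
    unfolding bound_def using X1 err_sets
    by (intro sum_mono downlink_success_le[OF \<tau> s(1) T_pos n] success_in_sets) auto
  also have "\<dots> = ennreal (g1\<^sup>2 / (real n * T)) * (\<Sum>s1<M1. \<Sum>s2<M2. \<Sum>i<n.
          \<integral>\<^sup>+(z1, z2, z3). ennreal ((sigX1 n g2 enc1 f2 s1 s2 z2 i)\<^sup>2) \<partial>noise \<sigma> n m) + M2 * ennreal bound"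
    by (subst sum.swap) (simp add: sum.distrib sum_distrib_left)
  also have "\<dots> \<le> ennreal (g1\<^sup>2 / (real n * T)) * ennreal (real M1 * real M2 * real n * P1) + M2 * ennreal bound"
    using power by (intro add_mono mult_left_mono) auto
  also have "\<dots> = ennreal (M2 * (M1 * (g1\<^sup>2 * P1) / T + bound))"
    using n T_pos P1 by (simp add: ennreal_mult'[symmetric] ennreal_plus[symmetric] bound_def
        ennreal_of_nat_eq_real_of_nat field_simps del: ennreal_plus)
  finally have "(\<Sum>s1<M1. \<Sum>s2<M2. measure (noise \<sigma> n m) (success s1 s2)) \<le> M2 * (M1 * (g1\<^sup>2 * P1) / T + bound)"
    using T_pos P1 by (subst (asm) ennreal_le_iff) (auto simp: bound_def)
  with sum_measure_success_ge[of M1 M2 \<epsilon>] err_sets err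
  have "real M2 * ((1 - \<epsilon>) * M1) \<le> real M2 * (M1 * (g1\<^sup>2 * P1) / T + bound)"
    by (simp add: algebra_simps)
  then have "(1 - \<epsilon>) * M1 \<le> M1 * (g1\<^sup>2 * P1) / T + bound" using M2 by simp
  then show "(1 - \<epsilon>) * real M1 \<le> real M1 * (g1\<^sup>2 * P1) / T + exp \<gamma> + real M1 * exp (- s * \<gamma>) *
      exp (real n * (lr_moment_const \<sigma> (sqrt (\<sigma>\<^sup>2 + g1\<^sup>2 * P1)) s + lr_moment_coeff \<sigma> (sqrt (\<sigma>\<^sup>2 + g1\<^sup>2 * P1)) s * T))"
    unfolding bound_def \<tau>_def by (simp add: algebra_simps)
qed

lemma achievable_downlink_le:
  assumes Wm: "0 < Wm" and \<sigma>: "0 < \<sigma>" and P1: "0 \<le> P1"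
    and ach: "achievable Wm Ws g1 g21m g2 g21s \<sigma> P1 P2 R1 R2"
  shows "R1 \<le> Cap Wm (g1\<^sup>2 * P1 / \<sigma>\<^sup>2)"
proof (rule rate_le_capacity[OF Wm \<sigma>])
  fix \<epsilon> :: real assume "0 < \<epsilon>"
  with ach obtain N where "\<forall>n\<ge>N. \<exists>M1 M2. 2 powr (real n * R1 / (2 * Wm)) \<le> real M1
      \<and> is_code Wm Ws g1 g21m g2 g21s \<sigma> P1 P2 n M1 M2 \<epsilon>"
    unfolding achievable_def by blast
  then show "\<exists>N. \<forall>n\<ge>N. \<exists>M. 2 powr (real n * R1 / (2 * Wm)) \<le> M
      \<and> gaussian_converse_bound \<sigma> (g1\<^sup>2 * P1) \<epsilon> n M"
    using is_code_downlink_converse[OF \<sigma> P1] by blast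
qed (use P1 in simp)

lemma achievable_uplink_le:
  assumes Wm: "0 < Wm" and \<sigma>: "0 < \<sigma>" and P2: "0 \<le> P2"
    and ach: "achievable Wm Ws g1 g21m g2 g21s \<sigma> P1 P2 R1 R2"
  shows "R2 \<le> Cap Wm (g2\<^sup>2 * P2 / \<sigma>\<^sup>2)"
proof (rule rate_le_capacity[OF Wm \<sigma>])
  fix \<epsilon> :: real assume "0 < \<epsilon>"
  with ach obtain N where "\<forall>n\<ge>N. \<exists>M1 M2. 2 powr (real n * R2 / (2 * Wm)) \<le> real M2
      \<and> is_code Wm Ws g1 g21m g2 g21s \<sigma> P1 P2 n M1 M2 \<epsilon>"
    unfolding achievable_def by blast
  then show "\<exists>N. \<forall>n\<ge>N. \<exists>M. 2 powr (real n * R2 / (2 * Wm)) \<le> M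
      \<and> gaussian_converse_bound \<sigma> (g2\<^sup>2 * P2) \<epsilon> n M"
    using is_code_uplink_converse[OF \<sigma> P2] by blast
qed (use P2 in simp)

lemma capacity_region_le_Cap:
  assumes "0 < Wm" "0 < \<sigma>" "0 \<le> P1" "0 \<le> P2"
    and "(R1, R2) \<in> capacity_region Wm Ws g1 g21m g2 g21s \<sigma> P1 P2"
  shows "R1 \<le> Cap Wm (g1\<^sup>2 * P1 / \<sigma>\<^sup>2) \<and> R2 \<le> Cap Wm (g2\<^sup>2 * P2 / \<sigma>\<^sup>2)"
proof -
  define B where "B = {p :: real \<times> real. fst p \<le> Cap Wm (g1\<^sup>2 * P1 / \<sigma>\<^sup>2) \<and> snd p \<le> Cap Wm (g2\<^sup>2 * P2 / \<sigma>\<^sup>2)}"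
  have "closed B" unfolding B_def
    by (intro closed_Collect_conj closed_Collect_le continuous_intros)
  moreover have "{(R1, R2). achievable Wm Ws g1 g21m g2 g21s \<sigma> P1 P2 R1 R2} \<subseteq> B"
    unfolding B_def using achievable_downlink_le achievable_uplink_le assms(1-4) by auto
  ultimately have "capacity_region Wm Ws g1 g21m g2 g21s \<sigma> P1 P2 \<subseteq> B"
    unfolding capacity_region_def by (intro closure_minimal)
  with assms(5) show ?thesis unfolding B_def by auto
qed

lemma Cap_mono: "0 < Wm \<Longrightarrow> 0 \<le> x \<Longrightarrow> x \<le> y \<Longrightarrow> Cap Wm x \<le> Cap Wm y"
  unfolding Cap_def by (intro mult_left_mono log_mono) auto

lemma Cap_le_Cap_half:
  assumes "0 < Wm" "0 \<le> S"
  shows "Cap Wm S \<le> Cap Wm (S/2) + Wm"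
proof -
  have "log 2 (1 + S) \<le> log 2 (2 * (1 + S/2))" using assms by (intro log_mono) auto
  also have "\<dots> = 1 + log 2 (1 + S/2)" using assms by (subst log_mult) auto
  finally have "log 2 (1 + S) \<le> 1 + log 2 (1 + S/2)" .
  then have "Wm * log 2 (1 + S) \<le> Wm * (1 + log 2 (1 + S/2))" using assms by (intro mult_left_mono) auto
  then show ?thesis unfolding Cap_def by (simp add: algebra_simps)
qed

lemma ln_one_plus_le_scaled:
  fixes W Y :: real
  assumes W: "1 \<le> W" and Y: "0 \<le> Y"
  shows "ln (1 + Y) \<le> W * ln (1 + Y / W)"
proof -
  have "(1 - 1/W) * ln 1 + (1/W) * ln (1 + Y) \<le> ln ((1 - 1/W) * 1 + (1/W) * (1 + Y))"
    using concave_onD[OF ln_concave, of "1/W" 1 "1+Y"] W Y by simp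
  also have "(1 - 1/W) * 1 + (1/W) * (1 + Y) = 1 + Y / W" using W by (simp add: field_simps)
  finally have "ln (1 + Y) / W \<le> ln (1 + Y / W)" by simp
  then show ?thesis using W by (simp add: pos_divide_le_eq mult.commute)
qed

lemma cut_set_shift_in_R_DC:
  assumes Wm: "0 < Wm" "Wm \<le> Ws" and SNR: "0 \<le> SNR1" "0 \<le> SNR2" "SNR2 \<le> SNRs"
    and R: "R1 \<le> Cap Wm SNR1" "R2 \<le> Cap Wm SNR2"
  shows "(R1 - (Wm + Ws) / 2, R2 - (Wm + Ws) / 2) \<in> R_DC Wm Ws SNR1 SNR2 SNRs"
proof -
  have "Cap Wm (SNR2 / 2) \<le> Cap Wm (SNRs / 2)"
    using SNR by (intro Cap_mono Wm) auto
  also have "\<dots> \<le> Wm * (Ws / Wm * ln (1 + (SNRs / 2) / (Ws / Wm)) / ln 2)"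
    unfolding Cap_def log_def using ln_one_plus_le_scaled[of "Ws / Wm" "SNRs / 2"] SNR Wm
    by (intro mult_left_mono divide_right_mono) auto
  also have "\<dots> = Ws * log 2 (1 + 1/2 * SNRs / (Ws / Wm))"
    unfolding log_def using Wm by simp
  finally have "Cap Wm (SNR2 / 2) \<le> Ws * log 2 (1 + 1/2 * SNRs / (Ws / Wm))" .
  moreover have "R2 - (Wm + Ws) / 2 \<le> Cap Wm (SNR2 / 2)"
    using R(2) Cap_le_Cap_half[OF Wm(1) SNR(2)] Wm by argo
  moreover have "R1 - (Wm + Ws) / 2 \<le> Cap Wm SNR1" using R(1) Wm by argo
  ultimately show ?thesis unfolding R_DC_def by (intro UN_I[of "1/2"]) auto
qed

text \<open>With \<open>K = \<surd>2 - 1\<close> we have \<open>(1 + K)\<^sup>2 = 2\<close> and \<open>K\<^sup>2 = 3 - 2\<surd>2 = 1 / (1 + 2/(\<surd>2 - 1))\<close>, so the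
  hypothesis on \<open>SNR\<^sub>s\<^sub>i\<^sub>d\<^sub>e\<close> makes the interference term at most half of the denominator.\<close>

lemma cut_set_shift_in_R_EC:
  assumes Wm: "0 < Wm" "Wm \<le> Ws" and SNR: "0 \<le> SNR1" "0 \<le> SNR2" "0 \<le> INR" "0 \<le> SNRs"
    and side: "(1 + 2 / (sqrt 2 - 1)) * (INR - 2) \<le> SNRs"
    and R: "R1 \<le> Cap Wm SNR1" "R2 \<le> Cap Wm SNR2"
  shows "(R1 - (Wm + Ws) / 2, R2 - (Wm + Ws) / 2) \<in> R_EC Wm SNR1 SNR2 INR SNRs"
proof -
  define K :: real where "K = sqrt 2 - 1"
  define A where "A = 1 + K\<^sup>2 * SNRs / (1 + K)\<^sup>2"
  have K: "0 \<le> K" "(1 + K)\<^sup>2 = 2" "K\<^sup>2 = 3 - 2 * sqrt 2"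
    unfolding K_def by (auto simp: power2_eq_square algebra_simps)
  have "1 + 2 / (sqrt 2 - 1) = 3 + 2 * sqrt (2::real)"
    by (simp add: field_simps)
  have "(3 - 2 * sqrt 2) * ((3 + 2 * sqrt 2) * (INR - 2)) \<le> (3 - 2 * sqrt 2) * SNRs"
  proof (rule mult_left_mono)
    have "sqrt 2 \<le> (3/2 :: real)" by (rule power2_le_imp_le) (auto simp: power2_eq_square)
    then show "0 \<le> 3 - 2 * sqrt (2::real)" by simp
  qed (use side \<open>1 + 2 / (sqrt 2 - 1) = 3 + 2 * sqrt 2\<close> in simp)
  moreover have "(3 - 2 * sqrt 2) * (3 + 2 * sqrt 2) = (1::real)" by (simp add: algebra_simps)
  ultimately have "INR - 2 \<le> (3 - 2 * sqrt 2) * SNRs" by (simp add: mult.assoc[symmetric])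
  then have "INR / 2 \<le> A"
    unfolding A_def K by simp
  moreover have "0 < A" unfolding A_def K(2) using SNR by (simp add: add_pos_nonneg)
  ultimately have "1 / 2 \<le> A / (A + INR / 2)" using SNR by (simp add: field_simps)
  then have "SNR1 / 2 \<le> SNR1 * A / (A + INR / (1 + K)\<^sup>2)"
    using mult_left_mono[OF _ SNR(1)] unfolding K(2) by fastforce
  then have "Cap Wm (SNR1 / 2) \<le> Cap Wm (SNR1 * A / (A + INR / (1 + K)\<^sup>2))"
    using SNR by (intro Cap_mono Wm(1)) auto
  then have "R1 - (Wm + Ws) / 2 \<le> Cap Wm (SNR1 * A / (A + INR / (1 + K)\<^sup>2))"
    using R(1) Cap_le_Cap_half[OF Wm(1) SNR(1)] Wm by argo
  moreover have "R2 - (Wm + Ws) / 2 \<le> Cap Wm (SNR2 / (1 + K)\<^sup>2)"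
    unfolding K using R(2) Cap_le_Cap_half[OF Wm(1) SNR(2)] Wm by argo
  ultimately show ?thesis unfolding R_EC_def A_def using K(1) by (intro UN_I[of K]) auto
qed

text \<open>Part (2) only uses \<open>W \<ge> 1\<close>, not the integrality of \<open>W\<close>.\<close>

theorem theorem3:
  fixes Wm Ws g1 g21m g2 g21s \<sigma> P1 P2 :: real
  assumes "0 < Wm" "0 < Ws" "0 < \<sigma>" "0 < P1" "0 < P2"
  defines "SNR1 \<equiv> g1\<^sup>2 * P1 / \<sigma>\<^sup>2"
      and "SNR2 \<equiv> g2\<^sup>2 * P2 / \<sigma>\<^sup>2"
      and "INR \<equiv> g21m\<^sup>2 * P2 / \<sigma>\<^sup>2"
      and "SNRs \<equiv> g21s\<^sup>2 * P2 / \<sigma>\<^sup>2"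
      and "W \<equiv> Ws / Wm"
  shows
    "(1 \<le> W \<and> SNR2 \<le> SNRs \<longrightarrow>
        (\<forall>(R1, R2) \<in> capacity_region Wm Ws g1 g21m g2 g21s \<sigma> P1 P2.
           (R1 - (Wm + Ws) / 2, R2 - (Wm + Ws) / 2) \<in> R_DC Wm Ws SNR1 SNR2 SNRs))
   \<and> ((\<exists>k::nat. 1 \<le> k \<and> W = real k) \<and> (1 + 2 / (sqrt 2 - 1)) * (INR - 2) \<le> SNRs \<longrightarrow>
        (\<forall>(R1, R2) \<in> capacity_region Wm Ws g1 g21m g2 g21s \<sigma> P1 P2.
           (R1 - (Wm + Ws) / 2, R2 - (Wm + Ws) / 2) \<in> R_EC Wm SNR1 SNR2 INR SNRs))"
proof -
  have SNR: "0 \<le> SNR1" "0 \<le> SNR2" "0 \<le> INR" "0 \<le> SNRs"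
    unfolding SNR1_def SNR2_def INR_def SNRs_def using assms by auto
  have cut_set: "R1 \<le> Cap Wm SNR1" "R2 \<le> Cap Wm SNR2"
    if "(R1, R2) \<in> capacity_region Wm Ws g1 g21m g2 g21s \<sigma> P1 P2" for R1 R2
    using capacity_region_le_Cap[OF _ _ _ _ that] assms unfolding SNR1_def SNR2_def by auto
  have W: "Wm \<le> Ws" if "1 \<le> W" using that assms(1) unfolding W_def by (simp add: field_simps)
  show ?thesis
  proof (intro conjI impI ballI; clarify)
    fix R1 R2 assume "1 \<le> W" "SNR2 \<le> SNRs" "(R1, R2) \<in> capacity_region Wm Ws g1 g21m g2 g21s \<sigma> P1 P2"
    then show "(R1 - (Wm + Ws) / 2, R2 - (Wm + Ws) / 2) \<in> R_DC Wm Ws SNR1 SNR2 SNRs"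
      using cut_set_shift_in_R_DC[OF assms(1) W SNR(1,2)] cut_set by blast
  next
    fix R1 R2 k assume "1 \<le> k" "W = real k" "(1 + 2 / (sqrt 2 - 1)) * (INR - 2) \<le> SNRs"
      "(R1, R2) \<in> capacity_region Wm Ws g1 g21m g2 g21s \<sigma> P1 P2"
    then show "(R1 - (Wm + Ws) / 2, R2 - (Wm + Ws) / 2) \<in> R_EC Wm SNR1 SNR2 INR SNRs"
      using cut_set_shift_in_R_EC[OF assms(1) W SNR] cut_set by simp
  qed
qed

end
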